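(* Let $N\ge2$, $R>0$, let $g:[0,R]\to(0,\infty)$ be smooth, let $A,B,p,q$ be positive constants with $0<A<B$, and let $\kappa\in(0,1)$, all independent of $\epsilon$. For $\epsilon>0$ let $U_\epsilon$ be the unique solution of problem (N* ) described in the context, and let $\widetilde M=\sqrt{\frac{A(p+q)}{\max_{[0,R]}g}(\frac qp)^{\frac{p-q}{p+q}}}$. Then there are positive constants $\widetilde C_1,\widetilde C_2,\widetilde C_3$ independent of $\epsilon$ such that for all sufficiently small $\epsilon>0$, $$\int_{\epsilon^\kappa}^{R-\epsilon^\kappa}\frac1sU_\epsilon'(s)^2ds\le\widetilde C_1e^{-\frac{\widetilde M}{2\epsilon^{1-\kappa}}},\qquad \int_{R-\epsilon^\kappa}^RU_\epsilon'(s)^2ds\le\frac{\widetilde C_2}{\widetilde M\epsilon^3},$$ and $|\Lambda_{i,\epsilon}(R)|\le \widetilde C_3/\epsilon$ for $i=1,2$, where $$\Lambda_{1,\epsilon}(R)=\frac{\epsilon^2}{2}\int_0^R\frac{(N-2)g(s)+sg'(s)}{R^N}s^{N-1}U_\epsilon'(s)^2ds,$$ $$\Lambda_{2,\epsilon}(R)=-\frac{\epsilon^2}{2}g(\epsilon^\kappa)U_\epsilon'(\epsilon^\kappa)^2+\frac{\epsilon^2}{2}\int_{\epsilon^\kappa}^R\frac{2(N-1)g(s)+sg'(s)}{s}U_\epsilon'(s)^2ds.$$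
   Context: Problem (N* ): for $\epsilon>0$, find $U_\epsilon\in C^1([0,R])\cap C^\infty((0,R))$ such that for $r\in(0,R)$ $$\epsilon^2 g(r)\Big[U_\epsilon''(r)+\Big(\frac{N-1}{r}+\frac{g'(r)}{g(r)}\Big)U_\epsilon'(r)\Big]=\frac{R^N}{N}\Big(\frac{Ae^{pU_\epsilon(r)}}{\int_0^R s^{N-1}e^{pU_\epsilon(s)}ds}-\frac{Be^{-qU_\epsilon(r)}}{\int_0^R s^{N-1}e^{-qU_\epsilon(s)}ds}\Big),$$ together with $\int_0^R s^{N-1}U_\epsilon(s)\,ds=0$, $U_\epsilon'(0)=0$ and $U_\epsilon'(R)=\frac{R(A-B)}{\epsilon^2Ng(R)}$; it has a unique solution. *)

theory Defs
  imports "HOL-Analysis.Analysis"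
begin

definition C_inf_on :: "real set \<Rightarrow> (real \<Rightarrow> real) \<Rightarrow> bool" where
  "C_inf_on S f \<longleftrightarrow> (\<forall>k::nat. \<forall>x\<in>S. ((deriv ^^ k) f) differentiable (at x))"

definition smooth_on_closed :: "real \<Rightarrow> (real \<Rightarrow> real) \<Rightarrow> bool" where
  "smooth_on_closed R g \<longleftrightarrow> (\<exists>T. open T \<and> {0..R} \<subseteq> T \<and> C_inf_on T g)"

definition solves_Nstar ::
  "nat \<Rightarrow> real \<Rightarrow> (real \<Rightarrow> real) \<Rightarrow> real \<Rightarrow> real \<Rightarrow> real \<Rightarrow> real \<Rightarrow> real \<Rightarrow> (real \<Rightarrow> real) \<Rightarrow> bool"
  where
  "solves_Nstar N R g A B p q \<epsilon> U \<longleftrightarrow>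
     (\<exists>U'. (\<forall>r\<in>{0..R}. (U has_real_derivative U' r) (at r within {0..R}))
         \<and> continuous_on {0..R} U'
         \<and> U' 0 = 0
         \<and> U' R = R * (A - B) / (\<epsilon>\<^sup>2 * real N * g R))
   \<and> C_inf_on {0<..<R} U
   \<and> (\<forall>r\<in>{0<..<R}.
        \<epsilon>\<^sup>2 * g r * (deriv (deriv U) r + ((real N - 1) / r + deriv g r / g r) * deriv U r)
        = R ^ N / real N *
          (A * exp (p * U r) / integral {0..R} (\<lambda>s. s ^ (N - 1) * exp (p * U s))
           - B * exp (- q * U r) / integral {0..R} (\<lambda>s. s ^ (N - 1) * exp (- q * U s))))
   \<and> integral {0..R} (\<lambda>s. s ^ (N - 1) * U s) = 0"

end

theory Submission
  imports Defs
begin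

text \<open>Write \<open>flux = r\<^sup>N\<^sup>-\<^sup>1 g U'\<close> and let \<open>G\<close> be the right-hand side of (N*), so that
  \<open>\<epsilon>\<^sup>2 flux' = r\<^sup>N\<^sup>-\<^sup>1 G\<close>. The product \<open>G flux\<close> is nondecreasing and vanishes at \<open>0\<close>, while
  \<open>flux R < 0\<close> because \<open>A < B\<close>; hence \<open>G \<le> 0\<close>, so \<open>flux \<le> 0\<close>, \<open>U\<close> and \<open>G\<close> decrease, and
  \<open>\<partial>G/\<partial>U \<ge> q A\<close>. Then \<open>z = - flux\<close> satisfies \<open>z'' \<ge> \<mu>\<^sup>2 z\<close> for \<open>\<mu> = L/\<epsilon>\<close>, \<open>L\<^sup>2 max g = q A\<close>,
  which forces \<open>z r \<le> e\<^sup>-\<^sup>\<mu>\<^sup>(\<^sup>R\<^sup>-\<^sup>r\<^sup>) z R\<close> with \<open>z R = O(\<epsilon>\<^sup>-\<^sup>2)\<close>: \<open>U'\<close> is exponentially small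
  away from \<open>r = R\<close>. Integrating these pointwise bounds gives the four estimates; the
  exponential rate \<open>2 L\<close> beats the claimed \<open>M/2\<close> because \<open>M < 4 L\<close>.\<close>

lemma DERIV_nonneg_imp_le:
  fixes f f' :: "real \<Rightarrow> real"
  assumes "a \<le> b" "continuous_on {a..b} f"
    and "\<And>x. a < x \<Longrightarrow> x < b \<Longrightarrow> (f has_real_derivative f' x) (at x)"
    and "\<And>x. a < x \<Longrightarrow> x < b \<Longrightarrow> f' x \<ge> 0"
  shows "f a \<le> f b"
  using DERIV_nonneg_imp_increasing_open[of a b f] assms by blast

lemma has_integral_power_pred:
  fixes R :: real
  assumes "N \<ge> 1" "R \<ge> 0"
  shows "((\<lambda>s. s ^ (N - 1)) has_integral R ^ N / real N) {0..R}"
proof -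
  have "((\<lambda>s. s ^ (N - 1)) has_integral (R ^ N / real N - 0 ^ N / real N)) {0..R}"
    using assms
    by (intro fundamental_theorem_of_calculus)
       (auto intro!: derivative_eq_intros simp: has_real_derivative_iff_has_vector_derivative[symmetric])
  with assms show ?thesis by (simp add: power_0_left)
qed

lemma integral_power_pred_mult_le:
  fixes f :: "real \<Rightarrow> real"
  assumes "N \<ge> 1" "R \<ge> 0" "continuous_on {0..R} f" "\<And>s. s \<in> {0..R} \<Longrightarrow> f s \<le> c"
  shows "integral {0..R} (\<lambda>s. s ^ (N - 1) * f s) \<le> R ^ N / real N * c"
proof -
  have "integral {0..R} (\<lambda>s. s ^ (N - 1) * f s) \<le> integral {0..R} (\<lambda>s. s ^ (N - 1) * c)"
    using assms has_integral_power_pred[OF assms(1,2), THEN has_integral_mult_left, of c]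
    by (intro integral_le integrable_continuous_interval continuous_intros)
       (auto intro: mult_left_mono)
  also have "\<dots> = R ^ N / real N * c"
    by (rule integral_unique[OF has_integral_power_pred[OF assms(1,2), THEN has_integral_mult_left]])
  finally show ?thesis .
qed

lemma integral_power_pred_mult_ge:
  fixes f :: "real \<Rightarrow> real"
  assumes "N \<ge> 1" "R \<ge> 0" "continuous_on {0..R} f" "\<And>s. s \<in> {0..R} \<Longrightarrow> c \<le> f s"
  shows "R ^ N / real N * c \<le> integral {0..R} (\<lambda>s. s ^ (N - 1) * f s)"
  using integral_power_pred_mult_le[of N R "\<lambda>s. - f s" "- c"] assms continuous_on_minus[OF assms(3)]
  by auto

lemma integral_power_pred_mult_exp_pos:
  fixes h :: "real \<Rightarrow> real"
  assumes "N \<ge> 1" "R > 0" "continuous_on {0..R} h"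
  shows "integral {0..R} (\<lambda>s. s ^ (N - 1) * exp (h s)) > 0"
proof -
  obtain m where "\<forall>s\<in>{0..R}. h m \<le> h s"
    using continuous_attains_inf[OF compact_Icc _ assms(3)] assms(2) by auto
  then have "R ^ N / real N * exp (h m) \<le> integral {0..R} (\<lambda>s. s ^ (N - 1) * exp (h s))"
    using assms by (intro integral_power_pred_mult_ge continuous_on_exp) auto
  moreover have "R ^ N / real N * exp (h m) > 0" using assms by simp
  ultimately show ?thesis by linarith
qed

lemma integral_exp_le_inverse:
  fixes a b c R :: real
  assumes c: "c > 0" and ab: "a \<le> b" "b \<le> R"
  shows "integral {a..b} (\<lambda>s. exp (- c * (R - s))) \<le> 1 / c"
proof -
  have "((\<lambda>s. exp (- c * (R - s))) has_integral
      exp (- c * (R - b)) / c - exp (- c * (R - a)) / c) {a..b}"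
    using ab c
    by (intro fundamental_theorem_of_calculus)
       (auto intro!: derivative_eq_intros simp: has_real_derivative_iff_has_vector_derivative[symmetric])
  then have "integral {a..b} (\<lambda>s. exp (- c * (R - s))) = exp (- c * (R - b)) / c - exp (- c * (R - a)) / c"
    by (simp add: integral_unique)
  also have "\<dots> \<le> exp (- c * (R - b)) / c" using c by simp
  also have "\<dots> \<le> 1 / c" using c ab by (intro divide_right_mono) auto
  finally show ?thesis .
qed

lemma integrable_exp_decay: "(\<lambda>s. exp (- c * (R - s))) integrable_on {a..b}"
  for a b c R :: real
  by (intro integrable_continuous_interval continuous_intros)

lemma abs_integral_mult_le:
  fixes w f :: "real \<Rightarrow> real"
  assumes "(\<lambda>x. w x * f x) integrable_on S" "f integrable_on S"
    and "\<And>x. x \<in> S \<Longrightarrow> \<bar>w x\<bar> \<le> W" "\<And>x. x \<in> S \<Longrightarrow> f x \<ge> 0"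
  shows "\<bar>integral S (\<lambda>x. w x * f x)\<bar> \<le> W * integral S f"
proof -
  have "norm (integral S (\<lambda>x. w x * f x)) \<le> integral S (\<lambda>x. W * f x)"
    using assms by (intro integral_norm_bound_integral integrable_on_mult_right)
      (auto simp: abs_mult intro: mult_right_mono)
  then show ?thesis by simp
qed

lemma exp_neg_le_four_div_sq:
  fixes y :: real
  assumes y: "y > 0"
  shows "exp (- y) \<le> 4 / y\<^sup>2"
proof -
  have "y\<^sup>2 / 4 \<le> (1 + y / real 2) ^ 2" using y by (simp add: power2_eq_square field_simps)
  also have "\<dots> \<le> exp y" using y by (intro exp_ge_one_plus_x_over_n_power_n) auto
  finally show ?thesis using y by (simp add: exp_minus field_simps)
qed

text \<open>Any power of \<open>\<epsilon>\<close> is beaten by \<open>exp (- \<delta> \<epsilon>\<^sup>\<kappa>\<^sup>-\<^sup>1)\<close>, via \<open>x\<^sup>n \<le> (n/\<delta>)\<^sup>n e\<^sup>\<delta>\<^sup>x\<close>.\<close>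
lemma powr_neg_mult_exp_le:
  fixes \<epsilon> \<kappa> \<delta> c :: real and n :: nat
  assumes e: "0 < \<epsilon>" "\<epsilon> \<le> 1" and k: "\<kappa> < 1" and d: "\<delta> > 0"
    and n: "n > 0" "c / (1 - \<kappa>) \<le> real n"
  shows "\<epsilon> powr (- c) * exp (- \<delta> * \<epsilon> powr (\<kappa> - 1)) \<le> (real n / \<delta>) ^ n"
proof -
  define x where "x = \<epsilon> powr (\<kappa> - 1)"
  have x1: "x \<ge> 1"
  proof -
    have "\<epsilon> powr 0 \<le> \<epsilon> powr (\<kappa> - 1)" using e k by (intro powr_mono') auto
    then show ?thesis using e unfolding x_def by simp
  qed
  have "\<epsilon> powr (- c) = x powr (c / (1 - \<kappa>))"
  proof -
    have "(\<kappa> - 1) * (c / (1 - \<kappa>)) = - c" using k by (simp add: field_simps)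
    then show ?thesis unfolding x_def powr_powr by simp
  qed
  also have "\<dots> \<le> x ^ n" using n x1 by (auto intro: order_trans[OF powr_mono] simp: powr_realpow)
  also have "\<dots> = (real n / \<delta>) ^ n * (\<delta> * x / real n) ^ n"
    using d n by (simp add: power_mult_distrib[symmetric])
  also have "\<dots> \<le> (real n / \<delta>) ^ n * exp (\<delta> * x)"
  proof -
    have "(\<delta> * x / real n) ^ n \<le> (1 + \<delta> * x / real n) ^ n"
      using d x1 n by (intro power_mono) auto
    also have "\<dots> \<le> exp (\<delta> * x)"
      using d x1 n by (intro exp_ge_one_plus_x_over_n_power_n) (auto intro: order_trans[of _ 0])
    finally show ?thesis using d n by (intro mult_left_mono) auto
  qed
  finally have "\<epsilon> powr (- c) * exp (- \<delta> * x) \<le> (real n / \<delta>) ^ n * exp (\<delta> * x) * exp (- \<delta> * x)"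
    by (intro mult_right_mono) auto
  also have "\<dots> = (real n / \<delta>) ^ n" by (simp add: mult.assoc exp_add[symmetric])
  finally show ?thesis unfolding x_def .
qed

lemma sum_mult_powr_lt:
  fixes p q :: real
  assumes p: "p > 0" and q: "q > 0"
  shows "(p + q) * (q / p) powr ((p - q) / (p + q)) < 16 * q"
proof (cases "p \<le> q")
  case True
  have "(q / p) powr ((p - q) / (p + q)) \<le> (q / p) powr 0"
    using True p q by (intro powr_mono) (auto simp: divide_nonpos_pos)
  then have "(p + q) * (q / p) powr ((p - q) / (p + q)) \<le> p + q"
    using p q mult_left_mono[of _ 1 "p + q"] by simp
  then show ?thesis using True p q by linarith
next
  case False
  define e where "e = (p - q) / (p + q)"
  have "e - 1 = - (2 * q / (p + q))" unfolding e_def using p q by (simp add: field_simps)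
  moreover have "ln (q / p) = - ln (p / q)" using p q by (simp add: ln_div)
  ultimately have "(e - 1) * ln (q / p) = 2 * q / (p + q) * ln (p / q)" by simp
  also have "\<dots> \<le> 2 * q / (p + q) * (p / q - 1)"
    using p q by (intro mult_left_mono ln_le_minus_one) auto
  also have "\<dots> = 2 * (p - q) / (p + q)" using p q by (simp add: diff_divide_distrib[symmetric] divide_simps)
  also have "\<dots> \<le> 2" using p q by (simp add: pos_divide_le_eq)
  finally have "(e - 1) * ln (q / p) \<le> 2" .
  then have "q / p * exp ((e - 1) * ln (q / p)) \<le> q / p * exp 2"
    using p q by (intro mult_left_mono) auto
  moreover have "(q / p) powr e = q / p * exp ((e - 1) * ln (q / p))"
  proof -
    have "(q / p) powr e = (q / p) powr (1 + (e - 1))" by simp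
    also have "\<dots> = (q / p) powr 1 * (q / p) powr (e - 1)" by (rule powr_add)
    finally show ?thesis using p q by (simp add: powr_def mult.commute)
  qed
  ultimately have "(q / p) powr e \<le> q / p * exp 2" by simp
  also have "\<dots> < q / p * 8"
  proof -
    have "exp (2::real) = exp 1 * exp 1" by (simp add: exp_add[symmetric])
    also have "\<dots> \<le> 272 / 100 * (272 / 100)" using e_less_272 by (intro mult_mono) auto
    also have "\<dots> < 8" by simp
    finally show ?thesis using p q by (intro mult_strict_left_mono) auto
  qed
  finally have "(p + q) * (q / p) powr e < (p + q) * (q / p * 8)"
    using p q by (intro mult_strict_left_mono) auto
  also have "\<dots> < 2 * p * (q / p * 8)" using False p q by (intro mult_strict_right_mono) auto
  also have "\<dots> = 16 * q" using p by simp
  finally show ?thesis unfolding e_def .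
qed

lemma integral_cong_interior:
  fixes f h :: "real \<Rightarrow> real"
  assumes "\<And>x. x \<in> {a<..<b} \<Longrightarrow> f x = h x"
  shows "integral {a..b} f = integral {a..b} h"
  using assms by (intro integral_spike[of "{a, b}"]) auto

lemma abs_le_Sup_abs:
  fixes f :: "real \<Rightarrow> real"
  assumes "continuous_on {a..b} f" "x \<in> {a..b}"
  shows "\<bar>f x\<bar> \<le> Sup ((\<lambda>s. \<bar>f s\<bar>) ` {a..b})"
proof -
  have "compact ((\<lambda>s. \<bar>f s\<bar>) ` {a..b})"
    using assms(1) by (intro compact_continuous_image continuous_intros) auto
  then show ?thesis
    using assms(2) by (intro cSup_upper bounded_imp_bdd_above compact_imp_bounded) auto
qed

locale nstar_solution =
  fixes N :: nat and R A B p q \<epsilon> :: real and g g' u u' u'' :: "real \<Rightarrow> real"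
  assumes N2: "N \<ge> 2" and Rpos: "R > 0" and Apos: "A > 0" and AB: "A < B"
    and ppos: "p > 0" and qpos: "q > 0" and eps: "\<epsilon> > 0"
    and gpos: "\<And>r. r \<in> {0..R} \<Longrightarrow> g r > 0"
    and g_deriv: "\<And>r. r \<in> {0..R} \<Longrightarrow> (g has_real_derivative g' r) (at r)"
    and u_deriv: "\<And>r. r \<in> {0..R} \<Longrightarrow> (u has_real_derivative u' r) (at r within {0..R})"
    and u'_cont: "continuous_on {0..R} u'"
    and u'_0: "u' 0 = 0" and u'_R: "u' R = R * (A - B) / (\<epsilon>\<^sup>2 * real N * g R)"
    and u'_deriv: "\<And>r. r \<in> {0<..<R} \<Longrightarrow> (u' has_real_derivative u'' r) (at r)"
    and ode: "\<And>r. r \<in> {0<..<R} \<Longrightarrow>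
        \<epsilon>\<^sup>2 * g r * (u'' r + ((real N - 1) / r + g' r / g r) * u' r)
        = R ^ N / real N *
          (A * exp (p * u r) / integral {0..R} (\<lambda>s. s ^ (N - 1) * exp (p * u s))
           - B * exp (- q * u r) / integral {0..R} (\<lambda>s. s ^ (N - 1) * exp (- q * u s)))"
begin

definition "\<alpha> = R ^ N / real N * A / integral {0..R} (\<lambda>s. s ^ (N - 1) * exp (p * u s))"
definition "\<beta> = R ^ N / real N * B / integral {0..R} (\<lambda>s. s ^ (N - 1) * exp (- q * u s))"

text \<open>\<open>G r\<close> is the right-hand side of (N*) at \<open>r\<close> and \<open>dGdu r\<close> its derivative in \<open>u\<close>;
  in divergence form (N*) reads \<open>\<epsilon>\<^sup>2 flux' = r\<^sup>N\<^sup>-\<^sup>1 G\<close>.\<close>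
definition "G r = \<alpha> * exp (p * u r) - \<beta> * exp (- q * u r)" for r
definition "dGdu r = p * \<alpha> * exp (p * u r) + q * \<beta> * exp (- q * u r)" for r
definition "flux r = r ^ (N - 1) * g r * u' r" for r

lemma continuous_on_u: "continuous_on {0..R} u"
  using u_deriv by (meson continuous_on_eq_continuous_within DERIV_continuous)

lemma continuous_on_g: "continuous_on {0..R} g"
  using g_deriv by (meson DERIV_isCont continuous_at_imp_continuous_on)

lemma u_has_deriv_at: "r \<in> {0<..<R} \<Longrightarrow> (u has_real_derivative u' r) (at r)"
  using u_deriv[of r] at_within_Icc_at[of 0 r R] by auto

lemma alpha_pos: "\<alpha> > 0"
proof -
  have "integral {0..R} (\<lambda>s. s ^ (N - 1) * exp (p * u s)) > 0"
    using N2 Rpos by (intro integral_power_pred_mult_exp_pos continuous_on_mult_left continuous_on_u) auto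
  then show ?thesis using N2 Rpos Apos by (simp add: \<alpha>_def)
qed

lemma beta_pos: "\<beta> > 0"
proof -
  have "integral {0..R} (\<lambda>s. s ^ (N - 1) * exp (- q * u s)) > 0"
    using N2 Rpos by (intro integral_power_pred_mult_exp_pos continuous_on_mult_left continuous_on_u) auto
  then show ?thesis using N2 Rpos Apos AB by (simp add: \<beta>_def)
qed

lemma dGdu_pos: "dGdu r > 0"
  using alpha_pos beta_pos ppos qpos by (simp add: dGdu_def add_pos_pos)

lemma continuous_on_G: "continuous_on {0..R} G"
  unfolding G_def by (intro continuous_intros continuous_on_u)

lemma continuous_on_flux: "continuous_on {0..R} flux"
  unfolding flux_def by (intro continuous_intros continuous_on_g u'_cont)

lemma flux_0: "flux 0 = 0"
  using N2 by (simp add: flux_def u'_0)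

lemma flux_R: "flux R = - (R ^ N * (B - A) / (real N * \<epsilon>\<^sup>2))"
proof -
  have "R ^ (N - 1) * R = R ^ N" using N2 by (cases N) auto
  moreover have "g R > 0" using gpos[of R] Rpos by auto
  ultimately show ?thesis using Rpos eps N2 unfolding flux_def u'_R
    by (simp add: field_simps power2_eq_square)
qed

lemma flux_R_neg: "flux R < 0"
  unfolding flux_R using Rpos AB N2 eps by (auto intro!: divide_pos_pos)

lemma G_has_deriv: "r \<in> {0<..<R} \<Longrightarrow> (G has_real_derivative dGdu r * u' r) (at r)"
  unfolding G_def[abs_def] dGdu_def
  by (rule DERIV_cong, rule derivative_eq_intros u_has_deriv_at | simp)+ (simp add: algebra_simps)

lemma flux_has_deriv:
  assumes r: "r \<in> {0<..<R}"
  shows "(flux has_real_derivative r ^ (N - 1) * G r / \<epsilon>\<^sup>2) (at r)"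
proof -
  have g: "g r > 0" using gpos r by auto
  have rN: "r ^ (N - 1) = r * r ^ (N - 2)" using N2
    by (cases N; cases "N - 1") (auto simp: numeral_2_eq_2)
  have G_eq: "\<epsilon>\<^sup>2 * g r * (u'' r + ((real N - 1) / r + g' r / g r) * u' r) = G r"
    using ode[OF r] by (simp add: G_def \<alpha>_def \<beta>_def right_diff_distrib)
  have pow: "((\<lambda>r. r ^ (N - 1)) has_real_derivative real (N - 1) * r ^ (N - 2)) (at r)"
    using DERIV_pow[of "N - 1" r] by (simp add: numeral_2_eq_2)
  have "(flux has_real_derivative
      real (N - 1) * r ^ (N - 2) * g r * u' r + r ^ (N - 1) * g' r * u' r + r ^ (N - 1) * g r * u'' r) (at r)"
    unfolding flux_def[abs_def] using r
    by (intro DERIV_cong[OF DERIV_mult[OF DERIV_mult[OF pow g_deriv] u'_deriv]]) (auto simp: algebra_simps)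
  moreover have "real (N - 1) * r ^ (N - 2) * g r * u' r + r ^ (N - 1) * g' r * u' r + r ^ (N - 1) * g r * u'' r
      = r ^ (N - 1) * G r / \<epsilon>\<^sup>2"
    using r g eps N2 unfolding G_eq[symmetric] rN
    by (simp add: field_simps)
  ultimately show ?thesis by simp
qed

lemma G_mult_flux_mono:
  assumes "0 \<le> x" "x \<le> y" "y \<le> R"
  shows "G x * flux x \<le> G y * flux y"
proof (rule DERIV_nonneg_imp_le[where f = "\<lambda>r. G r * flux r"
      and f' = "\<lambda>r. dGdu r * u' r * flux r + G r * (r ^ (N - 1) * G r / \<epsilon>\<^sup>2)"])
  show "continuous_on {x..y} (\<lambda>r. G r * flux r)"
    using assms by (intro continuous_intros continuous_on_subset[OF continuous_on_G]
        continuous_on_subset[OF continuous_on_flux]) auto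
next
  fix r assume "x < r" "r < y"
  then have r: "r \<in> {0<..<R}" using assms by auto
  show "((\<lambda>r. G r * flux r) has_real_derivative
      dGdu r * u' r * flux r + G r * (r ^ (N - 1) * G r / \<epsilon>\<^sup>2)) (at r)"
    using DERIV_mult[OF G_has_deriv[OF r] flux_has_deriv[OF r]] by (simp add: ac_simps)
  have "dGdu r * u' r * flux r = dGdu r * (r ^ (N - 1) * g r) * (u' r)\<^sup>2"
    unfolding flux_def by (simp add: power2_eq_square)
  also have "\<dots> \<ge> 0" using dGdu_pos[of r] gpos[of r] r by (auto intro!: mult_nonneg_nonneg)
  finally show "0 \<le> dGdu r * u' r * flux r + G r * (r ^ (N - 1) * G r / \<epsilon>\<^sup>2)"
    using r by (simp add: power2_eq_square[symmetric] mult.left_commute[of "G r"])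
qed (use assms in auto)

lemma G_mult_flux_nonneg: "r \<in> {0..R} \<Longrightarrow> G r * flux r \<ge> 0"
  using G_mult_flux_mono[of 0 r] flux_0 by auto

text \<open>If \<open>G\<close> were positive somewhere, then \<open>G flux\<close>, squeezed between \<open>0\<close> and its value
  at the next zero of \<open>G\<close>, would vanish on an interval where \<open>G > 0\<close>, so \<open>flux = 0\<close> there,
  contradicting \<open>\<epsilon>\<^sup>2 flux' = r\<^sup>N\<^sup>-\<^sup>1 G > 0\<close>.\<close>
lemma G_nonpos:
  assumes r0: "r \<in> {0..R}"
  shows "G r \<le> 0"
proof (rule ccontr)
  assume "\<not> G r \<le> 0"
  then have Gr: "G r > 0" by simp
  have GR: "G R \<le> 0"
    using G_mult_flux_nonneg[of R] flux_R_neg Rpos by (auto simp: zero_le_mult_iff)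
  then have rR: "r < R" using Gr r0 by (cases "r = R") auto
  obtain r1 where r1: "r \<le> r1" "r1 \<le> R" "G r1 = 0"
    using IVT2'[of G R 0 r] GR Gr rR continuous_on_subset[OF continuous_on_G, of "{r..R}"] r0 by auto
  have rr1: "r < r1" using r1 Gr by (cases "r = r1") auto
  obtain d where d: "d > 0" "\<forall>x'\<in>{0..R}. dist x' r < d \<longrightarrow> dist (G x') (G r) < G r"
    using continuous_on_G r0 Gr unfolding continuous_on_iff by blast
  define s1 where "s1 = min (r + d / 2) r1"
  have s1: "r < s1" "s1 \<le> r1" using d rr1 by (auto simp: s1_def)
  have G_pos: "G x > 0" if "r \<le> x" "x \<le> s1" for x
  proof -
    have "x \<in> {0..R}" "dist x r < d" using that r0 r1 s1 d by (auto simp: s1_def dist_real_def)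
    then show ?thesis using d(2) by (auto simp: dist_real_def)
  qed
  have flux_zero: "flux x = 0" if "r \<le> x" "x \<le> s1" for x
  proof -
    have "0 \<le> G x * flux x" using G_mult_flux_nonneg[of x] that r0 r1 s1 by auto
    moreover have "G x * flux x \<le> G r1 * flux r1" using G_mult_flux_mono[of x r1] that r0 r1 s1 by auto
    ultimately show ?thesis using r1 G_pos[OF that] by simp
  qed
  have "continuous_on {r..s1} flux"
    using r0 r1 s1 by (intro continuous_on_subset[OF continuous_on_flux]) auto
  moreover have "flux differentiable (at x)" if "r < x" "x < s1" for x
    using flux_has_deriv[of x] that r0 r1 s1 real_differentiable_def by fastforce
  ultimately obtain l z where z: "r < z" "z < s1" "(flux has_real_derivative l) (at z)"
    "flux s1 - flux r = (s1 - r) * l"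
    using MVT[OF s1(1)] by blast
  then have "z \<in> {0<..<R}" using r0 r1 s1 by auto
  then have "l = z ^ (N - 1) * G z / \<epsilon>\<^sup>2" using DERIV_unique[OF z(3) flux_has_deriv] by blast
  also have "\<dots> > 0" using G_pos[of z] z r0 eps by auto
  finally have "(s1 - r) * l > 0" using s1 by simp
  then show False using z(4) flux_zero[of s1] flux_zero[of r] s1 by simp
qed

lemma flux_nonpos:
  assumes r: "r \<in> {0..R}"
  shows "flux r \<le> 0"
proof -
  have "- flux 0 \<le> - flux r"
  proof (rule DERIV_nonneg_imp_le[where f = "\<lambda>x. - flux x" and f' = "\<lambda>x. - (x ^ (N - 1) * G x / \<epsilon>\<^sup>2)"])
    show "continuous_on {0..r} (\<lambda>x. - flux x)"
      using r by (intro continuous_intros continuous_on_subset[OF continuous_on_flux]) auto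
  next
    fix x assume "0 < x" "x < r"
    then have x: "x \<in> {0<..<R}" using r by auto
    show "((\<lambda>x. - flux x) has_real_derivative - (x ^ (N - 1) * G x / \<epsilon>\<^sup>2)) (at x)"
      using DERIV_minus[OF flux_has_deriv[OF x]] .
    have "x ^ (N - 1) * G x / \<epsilon>\<^sup>2 \<le> 0"
      using G_nonpos[of x] x eps by (intro divide_nonpos_pos mult_nonneg_nonpos) auto
    then show "0 \<le> - (x ^ (N - 1) * G x / \<epsilon>\<^sup>2)" by simp
  qed (use r in auto)
  then show ?thesis using flux_0 by simp
qed

lemma u'_nonpos:
  assumes r: "r \<in> {0..R}"
  shows "u' r \<le> 0"
proof (cases "r = 0")
  case True
  then show ?thesis using u'_0 by simp
next
  case False
  then have "r ^ (N - 1) * g r > 0" using r gpos by auto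
  moreover have "(r ^ (N - 1) * g r) * u' r \<le> 0" using flux_nonpos[OF r] unfolding flux_def by simp
  ultimately show ?thesis using mult_pos_pos[of "r ^ (N - 1) * g r" "u' r"] by linarith
qed

lemma u_antimono:
  assumes "0 \<le> x" "x \<le> y" "y \<le> R"
  shows "u y \<le> u x"
proof -
  have "- u x \<le> - u y"
  proof (rule DERIV_nonneg_imp_le[where f = "\<lambda>x. - u x" and f' = "\<lambda>r. - u' r"])
    show "continuous_on {x..y} (\<lambda>x. - u x)"
      using assms by (intro continuous_intros continuous_on_subset[OF continuous_on_u]) auto
  qed (use assms DERIV_minus[OF u_has_deriv_at] u'_nonpos in auto)
  then show ?thesis by simp
qed

lemma G_antimono:
  assumes "0 \<le> x" "x \<le> y" "y \<le> R"
  shows "G y \<le> G x"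
proof -
  have "- G x \<le> - G y"
  proof (rule DERIV_nonneg_imp_le[where f = "\<lambda>x. - G x" and f' = "\<lambda>r. - (dGdu r * u' r)"])
    show "continuous_on {x..y} (\<lambda>x. - G x)"
      using assms by (intro continuous_intros continuous_on_subset[OF continuous_on_G]) auto
  next
    fix r assume "x < r" "r < y"
    then show "0 \<le> - (dGdu r * u' r)"
      using assms u'_nonpos[of r] dGdu_pos[of r] by (auto simp: mult_le_0_iff)
  qed (use assms DERIV_minus[OF G_has_deriv] in auto)
  then show ?thesis by simp
qed

lemma dGdu_ge:
  assumes r: "r \<in> {0..R}"
  shows "q * A \<le> dGdu r"
proof -
  let ?I = "integral {0..R} (\<lambda>s. s ^ (N - 1) * exp (p * u s))"
  have "?I \<le> R ^ N / real N * exp (p * u 0)"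
    using N2 Rpos ppos u_antimono[of 0]
    by (intro integral_power_pred_mult_le continuous_intros continuous_on_u) auto
  then have "A * ?I \<le> A * (R ^ N / real N * exp (p * u 0))"
    using Apos by (intro mult_left_mono) auto
  moreover have "?I > 0"
    using N2 Rpos by (intro integral_power_pred_mult_exp_pos continuous_on_mult_left continuous_on_u) auto
  ultimately have "A \<le> A * (R ^ N / real N * exp (p * u 0)) / ?I"
    by (simp only: le_divide_eq) simp
  also have "\<dots> = \<alpha> * exp (p * u 0)" by (simp add: \<alpha>_def)
  also have "\<dots> \<le> \<beta> * exp (- q * u 0)"
    using G_nonpos[of 0] Rpos unfolding G_def by auto
  also have "\<dots> \<le> \<beta> * exp (- q * u r)"
    using u_antimono[of 0 r] r beta_pos qpos by auto
  finally have "q * A \<le> q * (\<beta> * exp (- q * u r))" using qpos by simp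
  also have "\<dots> \<le> dGdu r" unfolding dGdu_def using alpha_pos ppos by simp
  finally show ?thesis .
qed

lemma neg_flux_le_power:
  assumes r: "0 \<le> r" "r \<le> R / 2"
  shows "- flux r \<le> r ^ N * (- G (R / 2) / \<epsilon>\<^sup>2)"
proof -
  define K where "K = - G (R / 2) / \<epsilon>\<^sup>2"
  have "r ^ (N - 1) * K * 0 + flux 0 \<le> r ^ (N - 1) * K * r + flux r"
  proof (rule DERIV_nonneg_imp_le[where f = "\<lambda>t. r ^ (N - 1) * K * t + flux t"
        and f' = "\<lambda>t. r ^ (N - 1) * K + t ^ (N - 1) * G t / \<epsilon>\<^sup>2"])
    show "continuous_on {0..r} (\<lambda>t. r ^ (N - 1) * K * t + flux t)"
      using r Rpos by (intro continuous_intros continuous_on_subset[OF continuous_on_flux]) auto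
  next
    fix t assume t: "0 < t" "t < r"
    then have ti: "t \<in> {0<..<R}" using r Rpos by auto
    show "((\<lambda>t. r ^ (N - 1) * K * t + flux t) has_real_derivative
        r ^ (N - 1) * K + t ^ (N - 1) * G t / \<epsilon>\<^sup>2) (at t)"
      by (rule DERIV_cong[OF DERIV_add[OF DERIV_cmult[OF DERIV_ident] flux_has_deriv[OF ti]]]) simp
    have "- G t \<le> - G (R / 2)" using G_antimono[of t "R / 2"] t r by auto
    moreover have "0 \<le> - G t" using G_nonpos[of t] ti by auto
    ultimately have "t ^ (N - 1) * (- G t) \<le> r ^ (N - 1) * (- G (R / 2))"
      using t by (intro mult_mono power_mono) auto
    then have "t ^ (N - 1) * (- G t) / \<epsilon>\<^sup>2 \<le> r ^ (N - 1) * K"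
      unfolding K_def using eps by (simp add: divide_right_mono)
    then show "0 \<le> r ^ (N - 1) * K + t ^ (N - 1) * G t / \<epsilon>\<^sup>2" by simp
  qed (use r in auto)
  moreover have "r ^ (N - 1) * K * r = r ^ N * K" using N2 by (cases N) (auto simp: algebra_simps)
  ultimately show ?thesis using flux_0 unfolding K_def by linarith
qed

lemma neg_G_le_neg_flux:
  "R / 4 * (R / 2) ^ (N - 1) * (- G (R / 2) / \<epsilon>\<^sup>2) \<le> - flux (3 * R / 4)"
proof -
  define K where "K = (R / 2) ^ (N - 1) * (- G (R / 2) / \<epsilon>\<^sup>2)"
  have "- K * (R / 2) - flux (R / 2) \<le> - K * (3 * R / 4) - flux (3 * R / 4)"
  proof (rule DERIV_nonneg_imp_le[where f = "\<lambda>t. - K * t - flux t"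
        and f' = "\<lambda>t. - K - t ^ (N - 1) * G t / \<epsilon>\<^sup>2"])
    show "continuous_on {R / 2..3 * R / 4} (\<lambda>t. - K * t - flux t)"
      using Rpos by (intro continuous_intros continuous_on_subset[OF continuous_on_flux]) auto
  next
    fix t assume t: "R / 2 < t" "t < 3 * R / 4"
    then have ti: "t \<in> {0<..<R}" using Rpos by auto
    show "((\<lambda>t. - K * t - flux t) has_real_derivative - K - t ^ (N - 1) * G t / \<epsilon>\<^sup>2) (at t)"
      by (rule DERIV_cong[OF DERIV_diff[OF DERIV_cmult[OF DERIV_ident] flux_has_deriv[OF ti]]]) simp
    have "- G (R / 2) \<le> - G t" using G_antimono[of "R / 2" t] t Rpos by auto
    moreover have "0 \<le> - G (R / 2)" using G_nonpos[of "R / 2"] Rpos by auto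
    ultimately have "(R / 2) ^ (N - 1) * (- G (R / 2)) \<le> t ^ (N - 1) * (- G t)"
      using t Rpos by (intro mult_mono power_mono) auto
    then have "K \<le> t ^ (N - 1) * (- G t) / \<epsilon>\<^sup>2"
      unfolding K_def using eps by (simp add: divide_right_mono)
    then show "0 \<le> - K - t ^ (N - 1) * G t / \<epsilon>\<^sup>2" by simp
  qed (use Rpos in auto)
  moreover have "flux (R / 2) \<le> 0" using flux_nonpos[of "R / 2"] Rpos by auto
  ultimately show ?thesis unfolding K_def by (simp add: algebra_simps)
qed


lemma abs_u'_eq:
  assumes r: "r \<in> {0<..R}"
  shows "\<bar>u' r\<bar> = - flux r / (r ^ (N - 1) * g r)"
proof -
  have pos: "r ^ (N - 1) * g r \<noteq> 0" using r gpos[of r] by auto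
  have "\<bar>u' r\<bar> = - u' r" using u'_nonpos[of r] r by auto
  also have "\<dots> = (r ^ (N - 1) * g r) * (- u' r) / (r ^ (N - 1) * g r)"
    by (rule nonzero_mult_div_cancel_left[OF pos, symmetric])
  finally show ?thesis unfolding flux_def by simp
qed

end

text \<open>With \<open>z = - flux\<close> and \<open>H = z' - \<mu> z\<close>, the equation gives
  \<open>H' + \<mu> H = z'' - \<mu>\<^sup>2 z \<ge> (dGdu / (\<epsilon>\<^sup>2 g) - \<mu>\<^sup>2) z \<ge> 0\<close> as long as \<open>\<mu>\<^sup>2 \<epsilon>\<^sup>2 g \<le> q A \<le> dGdu\<close>;
  hence \<open>H \<ge> 0\<close>, i.e. \<open>z\<close> grows at least like \<open>e\<^sup>\<mu>\<^sup>r\<close>.\<close>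
locale nstar_decay = nstar_solution +
  fixes \<mu> gmax gmin :: real
  assumes mu_pos: "\<mu> > 0"
    and g_le_gmax: "\<And>r. r \<in> {0..R} \<Longrightarrow> g r \<le> gmax"
    and mu_small: "\<mu>\<^sup>2 * \<epsilon>\<^sup>2 * gmax \<le> q * A"
    and gmin_pos: "gmin > 0"
    and gmin_le_g: "\<And>r. r \<in> {0..R} \<Longrightarrow> gmin \<le> g r"
begin

definition "H r = - (r ^ (N - 1) * G r) / \<epsilon>\<^sup>2 + \<mu> * flux r" for r
definition "dH r = - (real (N - 1) * r ^ (N - 2) * G r + r ^ (N - 1) * (dGdu r * u' r)) / \<epsilon>\<^sup>2
  + \<mu> * (r ^ (N - 1) * G r / \<epsilon>\<^sup>2)" for r

lemma H_has_deriv: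
  assumes r: "r \<in> {0<..<R}"
  shows "(H has_real_derivative dH r) (at r)"
proof -
  have pow: "((\<lambda>r. r ^ (N - 1)) has_real_derivative real (N - 1) * r ^ (N - 2)) (at r)"
    using DERIV_pow[of "N - 1" r] by (simp add: numeral_2_eq_2)
  show ?thesis unfolding H_def[abs_def] dH_def
    by (rule DERIV_cong[OF DERIV_add[OF DERIV_cdivide[OF DERIV_minus[OF DERIV_mult[OF pow G_has_deriv[OF r]]]]
          DERIV_cmult[OF flux_has_deriv[OF r]]]])
       (simp add: algebra_simps)
qed

lemma dH_plus_mu_H_nonneg:
  assumes r: "r \<in> {0<..<R}"
  shows "dH r + \<mu> * H r \<ge> 0"
proof -
  have g: "g r > 0" "g r \<le> gmax" using gpos g_le_gmax r by auto
  have eq: "dH r + \<mu> * H r =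
     - real (N - 1) * r ^ (N - 2) * G r / \<epsilon>\<^sup>2 + (- flux r) * (dGdu r / (g r * \<epsilon>\<^sup>2) - \<mu>\<^sup>2)"
    unfolding dH_def H_def flux_def using g eps
    by (simp add: field_simps power2_eq_square)
  have "real (N - 1) * r ^ (N - 2) * G r \<le> 0"
    using G_nonpos[of r] r by (intro mult_nonneg_nonpos) auto
  then have first: "- real (N - 1) * r ^ (N - 2) * G r / \<epsilon>\<^sup>2 \<ge> 0"
    using eps by (simp add: divide_nonpos_pos)
  have "\<mu>\<^sup>2 \<le> q * A / (gmax * \<epsilon>\<^sup>2)"
    using mu_small g eps by (simp add: le_divide_eq mult.commute mult.left_commute)
  also have "\<dots> \<le> dGdu r / (gmax * \<epsilon>\<^sup>2)"
    using dGdu_ge[of r] r g eps by (auto intro!: divide_right_mono)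
  also have "\<dots> \<le> dGdu r / (g r * \<epsilon>\<^sup>2)"
    using dGdu_pos[of r] g eps by (auto intro!: divide_left_mono)
  finally have "(- flux r) * (dGdu r / (g r * \<epsilon>\<^sup>2) - \<mu>\<^sup>2) \<ge> 0"
    using flux_nonpos[of r] r by (intro mult_nonneg_nonneg) auto
  with eq first show ?thesis by linarith
qed

lemma H_nonneg:
  assumes r: "r \<in> {0..R}"
  shows "H r \<ge> 0"
proof -
  have "exp (\<mu> * 0) * H 0 \<le> exp (\<mu> * r) * H r"
  proof (rule DERIV_nonneg_imp_le[where f = "\<lambda>x. exp (\<mu> * x) * H x"
        and f' = "\<lambda>x. exp (\<mu> * x) * (dH x + \<mu> * H x)"])
    show "continuous_on {0..r} (\<lambda>x. exp (\<mu> * x) * H x)"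
      using r eps unfolding H_def
      by (intro continuous_intros continuous_on_subset[OF continuous_on_G]
          continuous_on_subset[OF continuous_on_flux]) auto
  next
    fix x assume "0 < x" "x < r"
    then have x: "x \<in> {0<..<R}" using r by auto
    have "((\<lambda>x. exp (\<mu> * x)) has_real_derivative exp (\<mu> * x) * (\<mu> * 1)) (at x)"
      by (rule DERIV_fun_exp[OF DERIV_cmult[OF DERIV_ident]])
    from DERIV_mult[OF this H_has_deriv[OF x]]
    show "((\<lambda>x. exp (\<mu> * x) * H x) has_real_derivative exp (\<mu> * x) * (dH x + \<mu> * H x)) (at x)"
      by (simp add: algebra_simps)
    show "0 \<le> exp (\<mu> * x) * (dH x + \<mu> * H x)" using dH_plus_mu_H_nonneg[OF x] by simp
  qed (use r in auto)
  moreover have "H 0 = 0" using N2 flux_0 by (simp add: H_def power_0_left)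
  ultimately show ?thesis by (simp add: zero_le_mult_iff)
qed

lemma neg_flux_le_exp:
  assumes r: "r \<in> {0..R}"
  shows "- flux r \<le> exp (- \<mu> * (R - r)) * (- flux R)"
proof -
  have "exp (- \<mu> * r) * (- flux r) \<le> exp (- \<mu> * R) * (- flux R)"
  proof (rule DERIV_nonneg_imp_le[where f = "\<lambda>x. exp (- \<mu> * x) * (- flux x)"
        and f' = "\<lambda>x. exp (- \<mu> * x) * H x"])
    show "continuous_on {r..R} (\<lambda>x. exp (- \<mu> * x) * (- flux x))"
      using r by (intro continuous_intros continuous_on_subset[OF continuous_on_flux]) auto
  next
    fix x assume "r < x" "x < R"
    then have x: "x \<in> {0<..<R}" using r by auto
    have "((\<lambda>x. exp (- \<mu> * x)) has_real_derivative exp (- \<mu> * x) * (- \<mu> * 1)) (at x)"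
      by (rule DERIV_fun_exp[OF DERIV_cmult[OF DERIV_ident]])
    from DERIV_mult[OF this DERIV_minus[OF flux_has_deriv[OF x]]]
    show "((\<lambda>x. exp (- \<mu> * x) * (- flux x)) has_real_derivative exp (- \<mu> * x) * H x) (at x)"
      by (simp add: H_def algebra_simps)
    show "0 \<le> exp (- \<mu> * x) * H x" using H_nonneg[of x] x by simp
  qed (use r in auto)
  then have "exp (\<mu> * r) * (exp (- \<mu> * r) * (- flux r)) \<le> exp (\<mu> * r) * (exp (- \<mu> * R) * (- flux R))"
    by (simp add: mult_left_mono)
  then show ?thesis by (simp add: mult.assoc[symmetric] exp_add[symmetric] algebra_simps)
qed


definition "D = - flux R / (gmin * (R / 2) ^ (N - 1))"

lemma D_nonneg: "D \<ge> 0"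
  unfolding D_def using flux_R_neg gmin_pos Rpos by (intro divide_nonneg_pos) auto

lemma abs_u'_le_right:
  assumes r: "r \<in> {R / 2..R}"
  shows "\<bar>u' r\<bar> \<le> D * exp (- \<mu> * (R - r))"
proof -
  have ri: "r \<in> {0<..R}" "r \<in> {0..R}" using r Rpos by auto
  have den: "gmin * (R / 2) ^ (N - 1) \<le> r ^ (N - 1) * g r"
    using r gmin_le_g[OF ri(2)] gmin_pos Rpos by (subst mult.commute, intro mult_mono power_mono) auto
  have pos: "gmin * (R / 2) ^ (N - 1) > 0" using gmin_pos Rpos by auto
  have "\<bar>u' r\<bar> = - flux r / (r ^ (N - 1) * g r)" using abs_u'_eq[OF ri(1)] .
  also have "\<dots> \<le> - flux r / (gmin * (R / 2) ^ (N - 1))"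
    using flux_nonpos[OF ri(2)] den pos by (intro divide_left_mono) auto
  also have "\<dots> \<le> exp (- \<mu> * (R - r)) * (- flux R) / (gmin * (R / 2) ^ (N - 1))"
    using neg_flux_le_exp[OF ri(2)] pos by (intro divide_right_mono) auto
  also have "\<dots> = D * exp (- \<mu> * (R - r))" unfolding D_def by simp
  finally show ?thesis .
qed

text \<open>On \<open>[0, R/2]\<close>, the monotonicity of \<open>G\<close> gives \<open>- flux r \<le> K r\<^sup>N\<close> and \<open>K \<lesssim> - flux (3R/4)\<close>
  with \<open>K = - G (R/2) / \<epsilon>\<^sup>2\<close>; the decay estimate then bounds \<open>- flux (3R/4)\<close>.\<close>
lemma abs_u'_le_left:
  assumes r: "r \<in> {0..R / 2}"
  shows "\<bar>u' r\<bar> \<le> 4 * D * exp (- \<mu> * R / 4)"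
proof (cases "r = 0")
  case True
  then show ?thesis using u'_0 D_nonneg by simp
next
  case False
  have ri: "r \<in> {0<..R}" "r \<in> {0..R}" using r False Rpos by auto
  define K where "K = - G (R / 2) / \<epsilon>\<^sup>2"
  have K0: "K \<ge> 0" unfolding K_def using G_nonpos[of "R / 2"] Rpos eps by (intro divide_nonneg_pos) auto
  have rg: "r ^ (N - 1) * g r > 0" using ri gpos[of r] by auto
  have pos: "R / 4 * (R / 2) ^ (N - 1) > 0" using Rpos by auto
  have "\<bar>u' r\<bar> = - flux r / (r ^ (N - 1) * g r)" using abs_u'_eq[OF ri(1)] .
  also have "\<dots> \<le> r ^ N * K / (r ^ (N - 1) * g r)"
    using neg_flux_le_power[of r] r rg unfolding K_def by (intro divide_right_mono) auto
  also have "\<dots> = r * K / g r"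
  proof -
    have "r ^ N = r * r ^ (N - 1)" using N2 by (cases N) auto
    then show ?thesis using rg ri by (simp add: field_simps)
  qed
  also have "\<dots> \<le> R * K / gmin"
    using r K0 gmin_pos gmin_le_g[OF ri(2)] ri Rpos
    by (intro frac_le mult_right_mono mult_nonneg_nonneg) auto
  also have "\<dots> \<le> R * (exp (- \<mu> * (R - 3 * R / 4)) * (- flux R) / (R / 4 * (R / 2) ^ (N - 1))) / gmin"
  proof -
    have "K \<le> - flux (3 * R / 4) / (R / 4 * (R / 2) ^ (N - 1))"
      using neg_G_le_neg_flux[folded K_def] by (subst pos_le_divide_eq[OF pos]) (simp add: mult_ac)
    also have "\<dots> \<le> exp (- \<mu> * (R - 3 * R / 4)) * (- flux R) / (R / 4 * (R / 2) ^ (N - 1))"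
      using neg_flux_le_exp[of "3 * R / 4"] Rpos pos by (intro divide_right_mono) auto
    finally show ?thesis using Rpos gmin_pos by (intro divide_right_mono mult_left_mono) auto
  qed
  also have "\<dots> = 4 * D * exp (- \<mu> * R / 4)"
    unfolding D_def using Rpos gmin_pos by (simp add: field_simps)
  finally show ?thesis .
qed

lemma u'_sq_le_right:
  assumes "r \<in> {R / 2..R}"
  shows "(u' r)\<^sup>2 \<le> D\<^sup>2 * exp (- 2 * \<mu> * (R - r))"
proof -
  have "(u' r)\<^sup>2 = \<bar>u' r\<bar>\<^sup>2" by simp
  also have "\<dots> \<le> (D * exp (- \<mu> * (R - r)))\<^sup>2"
    using abs_u'_le_right[OF assms] by (intro power_mono) auto
  also have "\<dots> = D\<^sup>2 * exp (- 2 * \<mu> * (R - r))"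
    by (simp add: power_mult_distrib power2_eq_square exp_add[symmetric])
  finally show ?thesis .
qed

lemma u'_sq_le_left:
  assumes "r \<in> {0..R / 2}"
  shows "(u' r)\<^sup>2 \<le> 16 * D\<^sup>2 * exp (- \<mu> * R / 2)"
proof -
  have "(u' r)\<^sup>2 = \<bar>u' r\<bar>\<^sup>2" by simp
  also have "\<dots> \<le> (4 * D * exp (- \<mu> * R / 4))\<^sup>2"
    using abs_u'_le_left[OF assms] by (intro power_mono) auto
  also have "\<dots> = 16 * D\<^sup>2 * exp (- \<mu> * R / 2)"
    by (simp add: power_mult_distrib power2_eq_square exp_add[symmetric])
  finally show ?thesis .
qed

lemma u'_sq_le:
  assumes "r \<in> {0..R}"
  shows "(u' r)\<^sup>2 \<le> 16 * D\<^sup>2 * exp (- \<mu> * R / 2) + D\<^sup>2 * exp (- 2 * \<mu> * (R - r))"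
proof (cases "r \<le> R / 2")
  case True
  then show ?thesis using u'_sq_le_left[of r] assms by (simp add: add_increasing2)
next
  case False
  then show ?thesis using u'_sq_le_right[of r] assms by (simp add: add_increasing)
qed

lemma integrable_u'_sq: "{a..b} \<subseteq> {0..R} \<Longrightarrow> (\<lambda>s. (u' s)\<^sup>2) integrable_on {a..b}"
  by (intro integrable_continuous_interval continuous_intros continuous_on_subset[OF u'_cont])

lemma integral_u'_sq_le:
  "integral {0..R} (\<lambda>s. (u' s)\<^sup>2) \<le> 16 * D\<^sup>2 * exp (- \<mu> * R / 2) * R + D\<^sup>2 / (2 * \<mu>)"
proof -
  let ?c = "16 * D\<^sup>2 * exp (- \<mu> * R / 2)"
  have "integral {0..R} (\<lambda>s. (u' s)\<^sup>2) \<le> integral {0..R} (\<lambda>s. ?c + D\<^sup>2 * exp (- 2 * \<mu> * (R - s)))"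
    using u'_sq_le by (intro integral_le integrable_u'_sq integrable_continuous_interval continuous_intros) auto
  also have "\<dots> = ?c * R + D\<^sup>2 * integral {0..R} (\<lambda>s. exp (- 2 * \<mu> * (R - s)))"
    using Rpos integrable_on_mult_right[OF integrable_exp_decay, of "D\<^sup>2" "2 * \<mu>" R 0 R]
    by (subst integral_add) auto
  also have "\<dots> \<le> ?c * R + D\<^sup>2 * (1 / (2 * \<mu>))"
    using integral_exp_le_inverse[of "2 * \<mu>" 0 R R] mu_pos Rpos by (intro add_left_mono mult_left_mono) auto
  finally show ?thesis by simp
qed

lemma integral_u'_sq_right_le:
  assumes "R / 2 \<le> a" "a \<le> R"
  shows "integral {a..R} (\<lambda>s. (u' s)\<^sup>2) \<le> D\<^sup>2 / (2 * \<mu>)"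
proof -
  have "integral {a..R} (\<lambda>s. (u' s)\<^sup>2) \<le> integral {a..R} (\<lambda>s. D\<^sup>2 * exp (- 2 * \<mu> * (R - s)))"
    using assms Rpos u'_sq_le_right
    by (intro integral_le integrable_u'_sq integrable_continuous_interval continuous_intros) auto
  also have "\<dots> = D\<^sup>2 * integral {a..R} (\<lambda>s. exp (- 2 * \<mu> * (R - s)))" by simp
  also have "\<dots> \<le> D\<^sup>2 * (1 / (2 * \<mu>))"
    using integral_exp_le_inverse[of "2 * \<mu>" a R R] assms mu_pos by (intro mult_left_mono) auto
  finally show ?thesis by simp
qed

lemma integral_u'_sq_div_le:
  assumes a: "0 < a" "a \<le> R / 2"
  shows "integral {a..R} (\<lambda>s. (u' s)\<^sup>2 / s)
    \<le> 16 * R / a * (D\<^sup>2 * exp (- \<mu> * R / 2)) + 2 / R * (D\<^sup>2 / (2 * \<mu>))"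
proof -
  let ?c = "16 * D\<^sup>2 * exp (- \<mu> * R / 2) / a"
  have bound: "(u' s)\<^sup>2 / s \<le> ?c + 2 / R * (D\<^sup>2 * exp (- 2 * \<mu> * (R - s)))" if s: "s \<in> {a..R}" for s
  proof (cases "s \<le> R / 2")
    case True
    then have "(u' s)\<^sup>2 / s \<le> 16 * D\<^sup>2 * exp (- \<mu> * R / 2) / a"
      using u'_sq_le_left[of s] s a by (intro frac_le) auto
    then show ?thesis using Rpos by (simp add: add_increasing2)
  next
    case False
    then have "(u' s)\<^sup>2 / s \<le> D\<^sup>2 * exp (- 2 * \<mu> * (R - s)) / (R / 2)"
      using u'_sq_le_right[of s] s Rpos by (intro frac_le) auto
    moreover have "0 \<le> ?c" using a by auto
    ultimately show ?thesis by (simp add: field_simps)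
  qed
  have "integral {a..R} (\<lambda>s. (u' s)\<^sup>2 / s) \<le> integral {a..R} (\<lambda>s. ?c + 2 / R * (D\<^sup>2 * exp (- 2 * \<mu> * (R - s))))"
    using a bound by (intro integral_le integrable_continuous_interval continuous_intros
        continuous_on_subset[OF u'_cont]) auto
  also have "\<dots> = ?c * (R - a) + 2 / R * (D\<^sup>2 * integral {a..R} (\<lambda>s. exp (- 2 * \<mu> * (R - s))))"
    using a integrable_on_mult_right[OF integrable_exp_decay, of "2 / R * D\<^sup>2" "2 * \<mu>" R a R]
    by (subst integral_add) (auto simp: mult.assoc)
  also have "\<dots> \<le> ?c * R + 2 / R * (D\<^sup>2 * (1 / (2 * \<mu>)))"
    using a Rpos integral_exp_le_inverse[of "2 * \<mu>" a R R] mu_pos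
    by (intro add_mono mult_left_mono) auto
  finally show ?thesis by (simp add: ac_simps)
qed

lemma integral_u'_sq_div_middle_le:
  assumes e: "0 < e" "e \<le> R / 4"
  shows "integral {e..R - e} (\<lambda>s. (u' s)\<^sup>2 / s) \<le> 16 * R * D\<^sup>2 * exp (- 2 * \<mu> * e) / e"
proof -
  let ?c = "16 * D\<^sup>2 * exp (- 2 * \<mu> * e) / e"
  have bound: "(u' s)\<^sup>2 / s \<le> ?c" if s: "s \<in> {e..R - e}" for s
  proof -
    have "(u' s)\<^sup>2 \<le> 16 * D\<^sup>2 * exp (- 2 * \<mu> * e)"
    proof (cases "s \<le> R / 2")
      case True
      then have "(u' s)\<^sup>2 \<le> 16 * D\<^sup>2 * exp (- \<mu> * R / 2)" using u'_sq_le_left[of s] s e by auto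
      also have "\<dots> \<le> 16 * D\<^sup>2 * exp (- 2 * \<mu> * e)"
        using e mu_pos by (intro mult_left_mono) (auto simp: mult_le_cancel_left_pos)
      finally show ?thesis .
    next
      case False
      then have "(u' s)\<^sup>2 \<le> D\<^sup>2 * exp (- 2 * \<mu> * (R - s))" using u'_sq_le_right[of s] s e by auto
      also have "\<dots> \<le> 16 * D\<^sup>2 * exp (- 2 * \<mu> * e)"
        using e mu_pos s by (intro mult_mono) (auto simp: mult_le_cancel_left_pos)
      finally show ?thesis .
    qed
    then show ?thesis using s e by (intro frac_le) auto
  qed
  have "integral {e..R - e} (\<lambda>s. (u' s)\<^sup>2 / s) \<le> integral {e..R - e} (\<lambda>s. ?c)"
    using e bound by (intro integral_le integrable_continuous_interval continuous_intros
        continuous_on_subset[OF u'_cont]) auto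
  also have "\<dots> = ?c * (R - e - e)" using e Rpos by simp
  also have "\<dots> \<le> ?c * R" using e by (intro mult_left_mono) auto
  finally show ?thesis by (simp add: ac_simps)
qed

end

text \<open>The decay rate \<open>L/\<epsilon>\<close> with \<open>L\<^sup>2 gmax = q A\<close> is the largest one allowed in \<open>nstar_decay\<close>.\<close>
locale nstar_scaled = nstar_solution +
  fixes gmax gmin L :: real
  assumes g_le_gmax: "\<And>r. r \<in> {0..R} \<Longrightarrow> g r \<le> gmax"
    and gmin_pos: "gmin > 0"
    and gmin_le_g: "\<And>r. r \<in> {0..R} \<Longrightarrow> gmin \<le> g r"
    and L_pos: "L > 0" and L_sq: "L\<^sup>2 * gmax = q * A"
    and eps_le_1: "\<epsilon> \<le> 1"

sublocale nstar_scaled \<subseteq> nstar_decay N R A B p q \<epsilon> g g' u u' u'' "L / \<epsilon>" gmax gmin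
  using L_pos L_sq eps g_le_gmax gmin_pos gmin_le_g by unfold_locales (auto simp: power_divide)

context nstar_scaled
begin

definition "Z = R ^ N * (B - A) / (real N * gmin * (R / 2) ^ (N - 1))"

lemma D_eq: "D = Z / \<epsilon>\<^sup>2"
  unfolding D_def Z_def flux_R using eps gmin_pos N2 Rpos by (simp add: field_simps)

lemma eps_sq_D_sq_exp_le: "\<epsilon>\<^sup>2 * D\<^sup>2 * exp (- (L / \<epsilon>) * R / 2) \<le> 16 * Z\<^sup>2 / (L\<^sup>2 * R\<^sup>2)"
proof -
  have "exp (- (L / \<epsilon>) * R / 2) = exp (- (L / \<epsilon> * R / 2))" by simp
  also have "\<dots> \<le> 4 / (L / \<epsilon> * R / 2)\<^sup>2" using L_pos eps Rpos by (intro exp_neg_le_four_div_sq) simp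
  also have "\<dots> = 16 * \<epsilon>\<^sup>2 / (L\<^sup>2 * R\<^sup>2)" using eps by (simp add: field_simps)
  finally have bound: "exp (- (L / \<epsilon>) * R / 2) \<le> 16 * \<epsilon>\<^sup>2 / (L\<^sup>2 * R\<^sup>2)" .
  have "\<epsilon>\<^sup>2 * D\<^sup>2 * exp (- (L / \<epsilon>) * R / 2) = Z\<^sup>2 / \<epsilon>\<^sup>2 * exp (- (L / \<epsilon>) * R / 2)"
    unfolding D_eq using eps by (simp add: power_divide power2_eq_square)
  also have "\<dots> \<le> Z\<^sup>2 / \<epsilon>\<^sup>2 * (16 * \<epsilon>\<^sup>2 / (L\<^sup>2 * R\<^sup>2))" by (rule mult_left_mono[OF bound]) simp
  also have "\<dots> = 16 * Z\<^sup>2 / (L\<^sup>2 * R\<^sup>2)" using eps by (simp add: field_simps)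
  finally show ?thesis .
qed

lemma eps_sq_D_sq_div: "\<epsilon>\<^sup>2 * (D\<^sup>2 / (2 * (L / \<epsilon>))) = Z\<^sup>2 / (2 * L) / \<epsilon>"
  unfolding D_eq using eps L_pos by (simp add: power2_eq_square field_simps)


lemma integral_u'_sq_div_middle_scaled:
  assumes k: "0 < \<kappa>" "\<kappa> < 1" and e: "\<epsilon> powr \<kappa> \<le> R / 4"
  shows "integral {\<epsilon> powr \<kappa>..R - \<epsilon> powr \<kappa>} (\<lambda>s. (u' s)\<^sup>2 / s)
    \<le> 16 * R * Z\<^sup>2 * \<epsilon> powr (- 5) * exp (- 2 * L * \<epsilon> powr (\<kappa> - 1))"
proof -
  define e where "e = \<epsilon> powr \<kappa>"
  have e0: "e > 0" "e \<le> R / 4" using eps e unfolding e_def by auto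
  have exponent: "L / \<epsilon> * e = L * \<epsilon> powr (\<kappa> - 1)"
    unfolding e_def using eps by (simp add: powr_diff)
  have "\<epsilon> powr 5 \<le> \<epsilon> powr (4 + \<kappa>)" using eps eps_le_1 k by (intro powr_mono') auto
  also have "\<dots> = (\<epsilon>\<^sup>2)\<^sup>2 * e"
    unfolding e_def powr_add using powr_realpow[OF eps, of 4] by simp
  finally have "\<epsilon> powr 5 \<le> (\<epsilon>\<^sup>2)\<^sup>2 * e" .
  then have "1 / ((\<epsilon>\<^sup>2)\<^sup>2 * e) \<le> 1 / \<epsilon> powr 5"
    using eps e0 by (intro divide_left_mono mult_pos_pos) auto
  also have "\<dots> = \<epsilon> powr (- 5)" by (simp add: powr_minus divide_inverse)
  finally have "1 / ((\<epsilon>\<^sup>2)\<^sup>2 * e) \<le> \<epsilon> powr (- 5)" .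
  then have "16 * R * Z\<^sup>2 * (1 / ((\<epsilon>\<^sup>2)\<^sup>2 * e)) * exp (- 2 * L * \<epsilon> powr (\<kappa> - 1))
      \<le> 16 * R * Z\<^sup>2 * \<epsilon> powr (- 5) * exp (- 2 * L * \<epsilon> powr (\<kappa> - 1))"
    using Rpos by (intro mult_right_mono mult_left_mono) auto
  moreover have "16 * R * D\<^sup>2 * exp (- 2 * (L / \<epsilon>) * e) / e
      = 16 * R * Z\<^sup>2 * (1 / ((\<epsilon>\<^sup>2)\<^sup>2 * e)) * exp (- 2 * L * \<epsilon> powr (\<kappa> - 1))"
  proof -
    have "exp (- 2 * (L / \<epsilon>) * e) = exp (- 2 * L * \<epsilon> powr (\<kappa> - 1))"
      using exponent by (metis mult.assoc)
    then show ?thesis unfolding D_eq by (simp add: power_divide)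
  qed
  ultimately show ?thesis
    using integral_u'_sq_div_middle_le[OF e0] unfolding e_def by linarith
qed

lemma integral_u'_sq_div_middle_exp_le:
  assumes k: "0 < \<kappa>" "\<kappa> < 1" and e: "\<epsilon> powr \<kappa> \<le> R / 4"
    and M: "M < 4 * L" and n: "n > 0" "5 / (1 - \<kappa>) \<le> real n"
  shows "integral {\<epsilon> powr \<kappa>..R - \<epsilon> powr \<kappa>} (\<lambda>s. (u' s)\<^sup>2 / s)
    \<le> 16 * R * Z\<^sup>2 * (real n / (2 * L - M / 2)) ^ n * exp (- M / (2 * \<epsilon> powr (1 - \<kappa>)))"
proof -
  define x where "x = \<epsilon> powr (\<kappa> - 1)"
  define \<delta> where "\<delta> = 2 * L - M / 2"
  have "\<delta> > 0" using M unfolding \<delta>_def by simp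
  then have power_exp: "\<epsilon> powr (- 5) * exp (- \<delta> * x) \<le> (real n / \<delta>) ^ n"
    unfolding x_def using eps eps_le_1 k n by (intro powr_neg_mult_exp_le) auto
  have exponent: "- (M / 2) * x = - M / (2 * \<epsilon> powr (1 - \<kappa>))"
    unfolding x_def using eps by (simp add: powr_diff)
  have "integral {\<epsilon> powr \<kappa>..R - \<epsilon> powr \<kappa>} (\<lambda>s. (u' s)\<^sup>2 / s)
      \<le> 16 * R * Z\<^sup>2 * \<epsilon> powr (- 5) * exp (- 2 * L * x)"
    unfolding x_def by (rule integral_u'_sq_div_middle_scaled[OF k e])
  also have "\<dots> = 16 * R * Z\<^sup>2 * (\<epsilon> powr (- 5) * exp (- \<delta> * x)) * exp (- (M / 2) * x)"
    unfolding \<delta>_def by (simp add: exp_add[symmetric] algebra_simps)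
  also have "\<dots> \<le> 16 * R * Z\<^sup>2 * (real n / \<delta>) ^ n * exp (- (M / 2) * x)"
    using Rpos power_exp by (intro mult_right_mono mult_left_mono) auto
  finally show ?thesis unfolding \<delta>_def exponent .
qed

lemma integral_u'_sq_right_scaled:
  assumes "0 \<le> e" "e \<le> R / 2"
  shows "integral {R - e..R} (\<lambda>s. (u' s)\<^sup>2) \<le> Z\<^sup>2 / (2 * L) / \<epsilon> ^ 3"
proof -
  have "integral {R - e..R} (\<lambda>s. (u' s)\<^sup>2) \<le> D\<^sup>2 / (2 * (L / \<epsilon>))"
    using assms by (intro integral_u'_sq_right_le) auto
  also have "\<dots> = \<epsilon>\<^sup>2 * (D\<^sup>2 / (2 * (L / \<epsilon>))) / \<epsilon>\<^sup>2" using eps by simp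
  also have "\<dots> = Z\<^sup>2 / (2 * L) / \<epsilon> ^ 3"
    unfolding eps_sq_D_sq_div by (simp add: power2_eq_square power3_eq_cube)
  finally show ?thesis .
qed

lemma le_div_eps: "0 \<le> X \<Longrightarrow> X \<le> X / \<epsilon>"
  using eps eps_le_1 by (simp add: le_divide_eq mult_left_le)

lemma eps_sq_integral_u'_sq_le:
  "\<epsilon>\<^sup>2 * integral {0..R} (\<lambda>s. (u' s)\<^sup>2) \<le> (256 * Z\<^sup>2 / (L\<^sup>2 * R) + Z\<^sup>2 / (2 * L)) / \<epsilon>"
proof -
  have "\<epsilon>\<^sup>2 * integral {0..R} (\<lambda>s. (u' s)\<^sup>2)
      \<le> \<epsilon>\<^sup>2 * (16 * D\<^sup>2 * exp (- (L / \<epsilon>) * R / 2) * R + D\<^sup>2 / (2 * (L / \<epsilon>)))"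
    using integral_u'_sq_le by (intro mult_left_mono) auto
  also have "\<dots> = 16 * R * (\<epsilon>\<^sup>2 * D\<^sup>2 * exp (- (L / \<epsilon>) * R / 2)) + \<epsilon>\<^sup>2 * (D\<^sup>2 / (2 * (L / \<epsilon>)))"
    by (simp only: distrib_left mult_ac)
  also have "\<dots> \<le> 16 * R * (16 * Z\<^sup>2 / (L\<^sup>2 * R\<^sup>2)) + Z\<^sup>2 / (2 * L) / \<epsilon>"
    unfolding eps_sq_D_sq_div using eps_sq_D_sq_exp_le Rpos by (intro add_right_mono mult_left_mono) auto
  also have "\<dots> \<le> 256 * Z\<^sup>2 / (L\<^sup>2 * R) / \<epsilon> + Z\<^sup>2 / (2 * L) / \<epsilon>"
    using le_div_eps[of "256 * Z\<^sup>2 / (L\<^sup>2 * R)"] Rpos by (simp add: power2_eq_square)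
  finally show ?thesis by (simp add: add_divide_distrib)
qed

lemma eps_sq_integral_u'_sq_div_le:
  assumes a: "\<epsilon> \<le> a" "a \<le> R / 2"
  shows "\<epsilon>\<^sup>2 * integral {a..R} (\<lambda>s. (u' s)\<^sup>2 / s) \<le> (256 * Z\<^sup>2 / (L\<^sup>2 * R) + Z\<^sup>2 / (L * R)) / \<epsilon>"
proof -
  have a0: "0 < a" using a eps by simp
  have "\<epsilon>\<^sup>2 * integral {a..R} (\<lambda>s. (u' s)\<^sup>2 / s)
      \<le> \<epsilon>\<^sup>2 * (16 * R / a * (D\<^sup>2 * exp (- (L / \<epsilon>) * R / 2)) + 2 / R * (D\<^sup>2 / (2 * (L / \<epsilon>))))"
    using integral_u'_sq_div_le[OF a0 a(2)] by (intro mult_left_mono) auto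
  also have "\<dots> = 16 * R / a * (\<epsilon>\<^sup>2 * D\<^sup>2 * exp (- (L / \<epsilon>) * R / 2)) + 2 / R * (\<epsilon>\<^sup>2 * (D\<^sup>2 / (2 * (L / \<epsilon>))))"
    by (simp only: distrib_left mult.left_commute[of "\<epsilon>\<^sup>2"] mult.assoc)
  also have "\<dots> \<le> 16 * R / \<epsilon> * (16 * Z\<^sup>2 / (L\<^sup>2 * R\<^sup>2)) + 2 / R * (Z\<^sup>2 / (2 * L) / \<epsilon>)"
  proof -
    have "16 * R / a * (\<epsilon>\<^sup>2 * D\<^sup>2 * exp (- (L / \<epsilon>) * R / 2)) \<le> 16 * R / \<epsilon> * (\<epsilon>\<^sup>2 * D\<^sup>2 * exp (- (L / \<epsilon>) * R / 2))"
      using a eps Rpos by (intro mult_right_mono divide_left_mono) auto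
    also have "\<dots> \<le> 16 * R / \<epsilon> * (16 * Z\<^sup>2 / (L\<^sup>2 * R\<^sup>2))"
      using eps_sq_D_sq_exp_le eps Rpos by (intro mult_left_mono) auto
    finally show ?thesis unfolding eps_sq_D_sq_div by simp
  qed
  also have "\<dots> = (256 * Z\<^sup>2 / (L\<^sup>2 * R) + Z\<^sup>2 / (L * R)) / \<epsilon>"
    using Rpos by (simp add: power2_eq_square add_divide_distrib mult_ac)
  finally show ?thesis .
qed

lemma eps_sq_u'_sq_le_left: "r \<in> {0..R / 2} \<Longrightarrow> \<epsilon>\<^sup>2 * (u' r)\<^sup>2 \<le> 256 * Z\<^sup>2 / (L\<^sup>2 * R\<^sup>2)"
  using mult_left_mono[OF u'_sq_le_left, of r "\<epsilon>\<^sup>2"] eps_sq_D_sq_exp_le by simp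

lemma abs_weighted_energy_le:
  assumes w: "continuous_on {0..R} w" "\<And>s. s \<in> {0..R} \<Longrightarrow> \<bar>w s\<bar> \<le> W"
  shows "\<bar>\<epsilon>\<^sup>2 / 2 * integral {0..R} (\<lambda>s. w s * s ^ (N - 1) * (u' s)\<^sup>2)\<bar>
    \<le> W * R ^ (N - 1) / 2 * (256 * Z\<^sup>2 / (L\<^sup>2 * R) + Z\<^sup>2 / (2 * L)) / \<epsilon>"
proof -
  have W: "W \<ge> 0" using w(2)[of 0] Rpos by auto
  have "\<bar>integral {0..R} (\<lambda>s. w s * s ^ (N - 1) * (u' s)\<^sup>2)\<bar> \<le> W * R ^ (N - 1) * integral {0..R} (\<lambda>s. (u' s)\<^sup>2)"
  proof (rule abs_integral_mult_le)
    show "(\<lambda>s. w s * s ^ (N - 1) * (u' s)\<^sup>2) integrable_on {0..R}"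
      by (intro integrable_continuous_interval continuous_intros w(1) u'_cont)
    show "\<bar>w s * s ^ (N - 1)\<bar> \<le> W * R ^ (N - 1)" if "s \<in> {0..R}" for s
      using w(2)[OF that] that W by (auto simp: abs_mult intro!: mult_mono power_mono)
  qed (auto intro: integrable_u'_sq)
  then have "\<bar>\<epsilon>\<^sup>2 / 2 * integral {0..R} (\<lambda>s. w s * s ^ (N - 1) * (u' s)\<^sup>2)\<bar>
      \<le> \<epsilon>\<^sup>2 / 2 * (W * R ^ (N - 1) * integral {0..R} (\<lambda>s. (u' s)\<^sup>2))"
    by (simp add: abs_mult mult_left_mono)
  also have "\<dots> = W * R ^ (N - 1) / 2 * (\<epsilon>\<^sup>2 * integral {0..R} (\<lambda>s. (u' s)\<^sup>2))"
    by (simp only: mult_ac times_divide_eq_left times_divide_eq_right)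
  also have "\<dots> \<le> W * R ^ (N - 1) / 2 * ((256 * Z\<^sup>2 / (L\<^sup>2 * R) + Z\<^sup>2 / (2 * L)) / \<epsilon>)"
    using eps_sq_integral_u'_sq_le W Rpos by (intro mult_left_mono) auto
  finally show ?thesis by simp
qed

lemma abs_boundary_term_le:
  assumes a: "a \<in> {0..R / 2}"
  shows "\<bar>- \<epsilon>\<^sup>2 / 2 * g a * (u' a)\<^sup>2\<bar> \<le> gmax * 128 * Z\<^sup>2 / (L\<^sup>2 * R\<^sup>2) / \<epsilon>"
proof -
  have g: "0 < g a" "g a \<le> gmax" using gpos g_le_gmax a by auto
  have "\<bar>- \<epsilon>\<^sup>2 / 2 * g a * (u' a)\<^sup>2\<bar> = g a / 2 * (\<epsilon>\<^sup>2 * (u' a)\<^sup>2)" using g by (simp add: abs_mult)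
  also have "\<dots> \<le> gmax / 2 * (256 * Z\<^sup>2 / (L\<^sup>2 * R\<^sup>2))"
    using g eps_sq_u'_sq_le_left[OF a] by (intro mult_mono) auto
  also have "\<dots> = gmax * 128 * Z\<^sup>2 / (L\<^sup>2 * R\<^sup>2)" by simp
  also have "\<dots> \<le> gmax * 128 * Z\<^sup>2 / (L\<^sup>2 * R\<^sup>2) / \<epsilon>"
    using g by (intro le_div_eps) auto
  finally show ?thesis .
qed

lemma abs_weighted_energy_div_le:
  assumes w: "continuous_on {0..R} w" "\<And>s. s \<in> {0..R} \<Longrightarrow> \<bar>w s\<bar> \<le> W"
    and a: "\<epsilon> \<le> a" "a \<le> R / 2"
  shows "\<bar>\<epsilon>\<^sup>2 / 2 * integral {a..R} (\<lambda>s. w s / s * (u' s)\<^sup>2)\<bar>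
    \<le> W / 2 * ((256 * Z\<^sup>2 / (L\<^sup>2 * R) + Z\<^sup>2 / (L * R)) / \<epsilon>)"
proof -
  have W: "W \<ge> 0" using w(2)[of 0] Rpos by auto
  have a0: "0 < a" using a eps by auto
  have "\<bar>integral {a..R} (\<lambda>s. w s * ((u' s)\<^sup>2 / s))\<bar> \<le> W * integral {a..R} (\<lambda>s. (u' s)\<^sup>2 / s)"
  proof (rule abs_integral_mult_le[where w = w and f = "\<lambda>s. (u' s)\<^sup>2 / s"])
    show "(\<lambda>s. w s * ((u' s)\<^sup>2 / s)) integrable_on {a..R}" "(\<lambda>s. (u' s)\<^sup>2 / s) integrable_on {a..R}"
      by (intro integrable_continuous_interval continuous_intros continuous_on_subset[OF w(1)]
          continuous_on_subset[OF u'_cont]; use a0 in auto)+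
  qed (use a0 w(2) in auto)
  then have "\<bar>\<epsilon>\<^sup>2 / 2 * integral {a..R} (\<lambda>s. w s / s * (u' s)\<^sup>2)\<bar>
      \<le> \<epsilon>\<^sup>2 / 2 * (W * integral {a..R} (\<lambda>s. (u' s)\<^sup>2 / s))"
    by (simp add: abs_mult mult_left_mono)
  also have "\<dots> = W / 2 * (\<epsilon>\<^sup>2 * integral {a..R} (\<lambda>s. (u' s)\<^sup>2 / s))"
    by (simp only: mult_ac times_divide_eq_left times_divide_eq_right)
  also have "\<dots> \<le> W / 2 * ((256 * Z\<^sup>2 / (L\<^sup>2 * R) + Z\<^sup>2 / (L * R)) / \<epsilon>)"
    using eps_sq_integral_u'_sq_div_le[OF a] W by (intro mult_left_mono) auto
  finally show ?thesis .
qed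

lemma abs_boundary_energy_le:
  assumes w: "continuous_on {0..R} w" "\<And>s. s \<in> {0..R} \<Longrightarrow> \<bar>w s\<bar> \<le> W"
    and a: "\<epsilon> \<le> a" "a \<le> R / 2"
  shows "\<bar>- \<epsilon>\<^sup>2 / 2 * g a * (u' a)\<^sup>2 + \<epsilon>\<^sup>2 / 2 * integral {a..R} (\<lambda>s. w s / s * (u' s)\<^sup>2)\<bar>
    \<le> (gmax * 128 * Z\<^sup>2 / (L\<^sup>2 * R\<^sup>2) + W / 2 * (256 * Z\<^sup>2 / (L\<^sup>2 * R) + Z\<^sup>2 / (L * R))) / \<epsilon>"
proof -
  have "\<bar>- \<epsilon>\<^sup>2 / 2 * g a * (u' a)\<^sup>2 + \<epsilon>\<^sup>2 / 2 * integral {a..R} (\<lambda>s. w s / s * (u' s)\<^sup>2)\<bar>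
      \<le> \<bar>- \<epsilon>\<^sup>2 / 2 * g a * (u' a)\<^sup>2\<bar> + \<bar>\<epsilon>\<^sup>2 / 2 * integral {a..R} (\<lambda>s. w s / s * (u' s)\<^sup>2)\<bar>"
    by (rule abs_triangle_ineq)
  also have "\<dots> \<le> gmax * 128 * Z\<^sup>2 / (L\<^sup>2 * R\<^sup>2) / \<epsilon> + W / 2 * ((256 * Z\<^sup>2 / (L\<^sup>2 * R) + Z\<^sup>2 / (L * R)) / \<epsilon>)"
    using a eps by (intro add_mono abs_boundary_term_le abs_weighted_energy_div_le w) auto
  also have "\<dots> = (gmax * 128 * Z\<^sup>2 / (L\<^sup>2 * R\<^sup>2) + W / 2 * (256 * Z\<^sup>2 / (L\<^sup>2 * R) + Z\<^sup>2 / (L * R))) / \<epsilon>"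
    by (simp add: add_divide_distrib distrib_left)
  finally show ?thesis .
qed

end

locale nstar_problem =
  fixes N :: nat and R A B p q \<kappa> :: real and g :: "real \<Rightarrow> real"
  assumes N2: "N \<ge> 2" and Rpos: "R > 0"
    and g_smooth: "smooth_on_closed R g" and gpos: "\<forall>r\<in>{0..R}. g r > 0"
    and Apos: "0 < A" and AB: "A < B" and ppos: "p > 0" and qpos: "q > 0"
    and kappa: "0 < \<kappa>" "\<kappa> < 1"
begin

definition "gmax = Sup (g ` {0..R})"
definition "gmin = Inf (g ` {0..R})"
definition "L = sqrt (q * A / gmax)"
definition "M = sqrt (A * (p + q) / gmax * (q / p) powr ((p - q) / (p + q)))"
definition "Z = R ^ N * (B - A) / (real N * gmin * (R / 2) ^ (N - 1))"
text \<open>\<open>weight1\<close> and \<open>weight2\<close> are the coefficients of \<open>U'\<^sup>2\<close> in \<open>\<Lambda>\<^sub>1\<close> and \<open>\<Lambda>\<^sub>2\<close>; \<open>n\<close> and \<open>C1\<close>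
  come from \<open>powr_neg_mult_exp_le\<close> with \<open>\<delta> = 2 L - M/2 > 0\<close>, which absorbs the factor \<open>\<epsilon>\<^sup>-\<^sup>5\<close>
  of the middle estimate.\<close>
definition "weight1 s = ((real N - 2) * g s + s * deriv g s) / R ^ N" for s
definition "weight2 s = 2 * (real N - 1) * g s + s * deriv g s" for s
definition "W1 = Sup ((\<lambda>s. \<bar>weight1 s\<bar>) ` {0..R})"
definition "W2 = Sup ((\<lambda>s. \<bar>weight2 s\<bar>) ` {0..R})"
definition "n = nat \<lceil>5 / (1 - \<kappa>)\<rceil> + 1"
definition "C1 = 16 * R * Z\<^sup>2 * (real n / (2 * L - M / 2)) ^ n"
definition "C2 = M * Z\<^sup>2 / (2 * L)"
definition "K1 = W1 * R ^ (N - 1) / 2 * (256 * Z\<^sup>2 / (L\<^sup>2 * R) + Z\<^sup>2 / (2 * L))"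
definition "K2 = gmax * 128 * Z\<^sup>2 / (L\<^sup>2 * R\<^sup>2) + W2 / 2 * (256 * Z\<^sup>2 / (L\<^sup>2 * R) + Z\<^sup>2 / (L * R))"
definition "C3 = K1 + K2"
definition "eps0 = min 1 ((R / 4) powr (1 / \<kappa>))"

lemma deriv_power_differentiable: "r \<in> {0..R} \<Longrightarrow> (deriv ^^ k) g differentiable (at r)"
  using g_smooth unfolding smooth_on_closed_def C_inf_on_def by blast

lemma g_differentiable: "r \<in> {0..R} \<Longrightarrow> g differentiable (at r)"
  using deriv_power_differentiable[of r 0] by simp

lemma deriv_g_differentiable: "r \<in> {0..R} \<Longrightarrow> deriv g differentiable (at r)"
  using deriv_power_differentiable[of r 1] by simp

lemma g_has_deriv: "r \<in> {0..R} \<Longrightarrow> (g has_real_derivative deriv g r) (at r)"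
  using g_differentiable DERIV_deriv_iff_real_differentiable by blast

lemma continuous_on_g: "continuous_on {0..R} g"
  using g_differentiable by (meson continuous_at_imp_continuous_on differentiable_imp_continuous_within)

lemma continuous_on_deriv_g: "continuous_on {0..R} (deriv g)"
  using deriv_g_differentiable by (meson continuous_at_imp_continuous_on differentiable_imp_continuous_within)

lemma g_le_gmax: "r \<in> {0..R} \<Longrightarrow> g r \<le> gmax"
  unfolding gmax_def
  by (intro cSup_upper bounded_imp_bdd_above compact_imp_bounded compact_continuous_image continuous_on_g) auto

lemma gmin_le_g: "r \<in> {0..R} \<Longrightarrow> gmin \<le> g r"
  unfolding gmin_def
  by (intro cInf_lower bounded_imp_bdd_below compact_imp_bounded compact_continuous_image continuous_on_g) auto

lemma gmax_pos: "gmax > 0"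
  using g_le_gmax[of 0] gpos Rpos by force

lemma gmin_pos: "gmin > 0"
proof -
  obtain m where "m \<in> {0..R}" "\<forall>x\<in>{0..R}. g m \<le> g x"
    using continuous_attains_inf[OF compact_Icc _ continuous_on_g] Rpos by auto
  then have "gmin = g m" unfolding gmin_def by (intro cInf_eq_minimum) auto
  then show ?thesis using gpos \<open>m \<in> {0..R}\<close> by auto
qed

lemma L_pos: "L > 0" and L_sq: "L\<^sup>2 * gmax = q * A"
  unfolding L_def using qpos Apos gmax_pos by auto

lemma M_pos: "M > 0"
  unfolding M_def using Apos ppos qpos gmax_pos by auto

lemma M_lt: "M < 4 * L"
proof -
  have "A * (p + q) / gmax * (q / p) powr ((p - q) / (p + q)) = A / gmax * ((p + q) * (q / p) powr ((p - q) / (p + q)))"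
    by simp
  also have "\<dots> < A / gmax * (16 * q)"
    using sum_mult_powr_lt[OF ppos qpos] Apos gmax_pos by (intro mult_strict_left_mono) auto
  finally have "M < sqrt (16 * (q * A / gmax))" unfolding M_def by (simp add: mult_ac)
  also have "\<dots> = 4 * L" unfolding L_def real_sqrt_mult by simp
  finally show ?thesis .
qed

lemma continuous_on_weight1: "continuous_on {0..R} weight1"
  and continuous_on_weight2: "continuous_on {0..R} weight2"
  unfolding weight1_def[abs_def] weight2_def[abs_def] using Rpos
  by (intro continuous_intros continuous_on_g continuous_on_deriv_g; simp)+

lemma abs_weight1_le: "s \<in> {0..R} \<Longrightarrow> \<bar>weight1 s\<bar> \<le> W1"
  unfolding W1_def by (rule abs_le_Sup_abs[OF continuous_on_weight1])

lemma abs_weight2_le: "s \<in> {0..R} \<Longrightarrow> \<bar>weight2 s\<bar> \<le> W2"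
  unfolding W2_def by (rule abs_le_Sup_abs[OF continuous_on_weight2])

lemma Z_pos: "Z > 0"
  unfolding Z_def using Rpos AB N2 gmin_pos by auto

lemma K1_nonneg: "K1 \<ge> 0"
  unfolding K1_def using abs_weight1_le[of 0] Rpos Z_pos L_pos by auto

lemma K2_pos: "K2 > 0"
  unfolding K2_def using abs_weight2_le[of 0] Rpos Z_pos L_pos gmax_pos
  by (intro add_pos_nonneg mult_nonneg_nonneg) auto

lemma constants_pos: "C1 > 0" "C2 > 0" "C3 > 0"
  unfolding C1_def C2_def C3_def using Rpos Z_pos M_lt M_pos L_pos K1_nonneg K2_pos by (auto simp: n_def)

text \<open>The one-sided derivative \<open>U'\<close> of the definition agrees with \<open>deriv U\<close> only inside \<open>]0,R[\<close>.\<close>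
lemma solves_Nstar_imp_nstar_scaled:
  assumes sol: "solves_Nstar N R g A B p q \<epsilon> U" and eps: "0 < \<epsilon>" "\<epsilon> \<le> 1"
  obtains U' where "nstar_scaled N R A B p q \<epsilon> g (deriv g) U U' (deriv (deriv U)) gmax gmin L"
    and "\<And>r. r \<in> {0<..<R} \<Longrightarrow> deriv U r = U' r"
proof -
  obtain U' where U': "\<forall>r\<in>{0..R}. (U has_real_derivative U' r) (at r within {0..R})"
    "continuous_on {0..R} U'" "U' 0 = 0" "U' R = R * (A - B) / (\<epsilon>\<^sup>2 * real N * g R)"
    and smooth: "C_inf_on {0<..<R} U"
    and ode: "\<forall>r\<in>{0<..<R}.
        \<epsilon>\<^sup>2 * g r * (deriv (deriv U) r + ((real N - 1) / r + deriv g r / g r) * deriv U r)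
        = R ^ N / real N *
          (A * exp (p * U r) / integral {0..R} (\<lambda>s. s ^ (N - 1) * exp (p * U s))
           - B * exp (- q * U r) / integral {0..R} (\<lambda>s. s ^ (N - 1) * exp (- q * U s)))"
    using sol unfolding solves_Nstar_def by blast
  have dU: "deriv U r = U' r" if r: "r \<in> {0<..<R}" for r
  proof -
    have "(U has_real_derivative U' r) (at r within {0..R})" using U'(1) r by auto
    then have "(U has_real_derivative U' r) (at r)" using at_within_Icc_at[of 0 r R] r by simp
    then show ?thesis by (rule DERIV_imp_deriv)
  qed
  have "nstar_scaled N R A B p q \<epsilon> g (deriv g) U U' (deriv (deriv U)) gmax gmin L"
  proof unfold_locales
    show "(U' has_real_derivative deriv (deriv U) r) (at r)" if r: "r \<in> {0<..<R}" for r
    proof -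
      have "(deriv ^^ 1) U differentiable (at r)"
        using smooth r unfolding C_inf_on_def by blast
      then have "(deriv U has_real_derivative deriv (deriv U) r) (at r)"
        by (simp add: DERIV_deriv_iff_real_differentiable)
      then show ?thesis
        by (rule has_field_derivative_transform_within_open[OF _ open_greaterThanLessThan r]) (rule dU)
    qed
    show "\<epsilon>\<^sup>2 * g r * (deriv (deriv U) r + ((real N - 1) / r + deriv g r / g r) * U' r)
        = R ^ N / real N *
          (A * exp (p * U r) / integral {0..R} (\<lambda>s. s ^ (N - 1) * exp (p * U s))
           - B * exp (- q * U r) / integral {0..R} (\<lambda>s. s ^ (N - 1) * exp (- q * U s)))"
      if r: "r \<in> {0<..<R}" for r
      using ode r unfolding dU[OF r, symmetric] by blast
  qed (use N2 Rpos Apos AB ppos qpos eps gpos g_has_deriv U' g_le_gmax gmin_pos gmin_le_g L_pos L_sq in auto)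
  then show thesis using dU by (rule that)
qed

lemma eps0_pos: "eps0 > 0"
  unfolding eps0_def using Rpos by simp

lemma small_eps:
  assumes "0 < \<epsilon>" "\<epsilon> < eps0"
  shows "\<epsilon> \<le> 1" "\<epsilon> \<le> \<epsilon> powr \<kappa>" "\<epsilon> powr \<kappa> \<le> R / 4"
proof -
  show "\<epsilon> \<le> 1" using assms unfolding eps0_def by simp
  then have "\<epsilon> powr 1 \<le> \<epsilon> powr \<kappa>" using assms(1) kappa by (intro powr_mono') auto
  then show "\<epsilon> \<le> \<epsilon> powr \<kappa>" using assms(1) by simp
  have "\<epsilon> powr \<kappa> \<le> ((R / 4) powr (1 / \<kappa>)) powr \<kappa>"
    using assms kappa unfolding eps0_def by (intro powr_mono2) auto
  also have "\<dots> = R / 4" using kappa Rpos by (simp add: powr_powr)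
  finally show "\<epsilon> powr \<kappa> \<le> R / 4" .
qed

context
  fixes \<epsilon> :: real and U U' :: "real \<Rightarrow> real"
  assumes scaled: "nstar_scaled N R A B p q \<epsilon> g (deriv g) U U' (deriv (deriv U)) gmax gmin L"
    and deriv_U: "\<And>r. r \<in> {0<..<R} \<Longrightarrow> deriv U r = U' r"
    and eps: "0 < \<epsilon>" "\<epsilon> < eps0"
begin

interpretation S: nstar_scaled N R A B p q \<epsilon> g "deriv g" U U' "deriv (deriv U)" gmax gmin L
  by (fact scaled)

lemma scaled_Z: "S.Z = Z"
  unfolding S.Z_def Z_def ..

lemma powr_kappa_pos: "\<epsilon> powr \<kappa> > 0"
  using eps by simp

lemma middle_estimate:
  "integral {\<epsilon> powr \<kappa>..R - \<epsilon> powr \<kappa>} (\<lambda>s. 1 / s * (deriv U s)\<^sup>2) \<le> C1 * exp (- M / (2 * \<epsilon> powr (1 - \<kappa>)))"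
proof -
  have "n > 0" "5 / (1 - \<kappa>) \<le> real n" unfolding n_def by linarith+
  note e = small_eps[OF eps]
  have "integral {\<epsilon> powr \<kappa>..R - \<epsilon> powr \<kappa>} (\<lambda>s. 1 / s * (deriv U s)\<^sup>2)
      = integral {\<epsilon> powr \<kappa>..R - \<epsilon> powr \<kappa>} (\<lambda>s. (U' s)\<^sup>2 / s)"
    using powr_kappa_pos e(3) by (intro integral_cong_interior, subst deriv_U) (auto simp del: powr_gt_zero)
  also have "\<dots> \<le> C1 * exp (- M / (2 * \<epsilon> powr (1 - \<kappa>)))"
    using S.integral_u'_sq_div_middle_exp_le[OF kappa e(3) M_lt \<open>n > 0\<close> \<open>5 / (1 - \<kappa>) \<le> real n\<close>]
    unfolding scaled_Z C1_def .
  finally show ?thesis .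
qed

lemma right_estimate: "integral {R - \<epsilon> powr \<kappa>..R} (\<lambda>s. (deriv U s)\<^sup>2) \<le> C2 / (M * \<epsilon> ^ 3)"
proof -
  note e = small_eps[OF eps]
  have "integral {R - \<epsilon> powr \<kappa>..R} (\<lambda>s. (deriv U s)\<^sup>2) = integral {R - \<epsilon> powr \<kappa>..R} (\<lambda>s. (U' s)\<^sup>2)"
    using powr_kappa_pos e(3) by (intro integral_cong_interior, subst deriv_U) (auto simp del: powr_gt_zero)
  also have "\<dots> \<le> Z\<^sup>2 / (2 * L) / \<epsilon> ^ 3"
    using S.integral_u'_sq_right_scaled[of "\<epsilon> powr \<kappa>"] powr_kappa_pos e(3) unfolding scaled_Z by auto
  also have "\<dots> = C2 / (M * \<epsilon> ^ 3)" unfolding C2_def using M_pos by simp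
  finally show ?thesis .
qed

lemma weighted_estimate:
  "\<bar>\<epsilon>\<^sup>2 / 2 * integral {0..R}
      (\<lambda>s. ((real N - 2) * g s + s * deriv g s) / R ^ N * s ^ (N - 1) * (deriv U s)\<^sup>2)\<bar> \<le> C3 / \<epsilon>"
proof -
  have "integral {0..R} (\<lambda>s. ((real N - 2) * g s + s * deriv g s) / R ^ N * s ^ (N - 1) * (deriv U s)\<^sup>2)
      = integral {0..R} (\<lambda>s. weight1 s * s ^ (N - 1) * (U' s)\<^sup>2)"
    by (intro integral_cong_interior) (auto simp: deriv_U weight1_def)
  then have "\<bar>\<epsilon>\<^sup>2 / 2 * integral {0..R}
      (\<lambda>s. ((real N - 2) * g s + s * deriv g s) / R ^ N * s ^ (N - 1) * (deriv U s)\<^sup>2)\<bar>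
      = \<bar>\<epsilon>\<^sup>2 / 2 * integral {0..R} (\<lambda>s. weight1 s * s ^ (N - 1) * (U' s)\<^sup>2)\<bar>" by (simp only:)
  also have "\<dots> \<le> K1 / \<epsilon>"
    using S.abs_weighted_energy_le[OF continuous_on_weight1 abs_weight1_le] unfolding scaled_Z K1_def .
  also have "\<dots> \<le> C3 / \<epsilon>" unfolding C3_def using eps K2_pos by (intro divide_right_mono) auto
  finally show ?thesis .
qed

lemma boundary_estimate:
  "\<bar>- \<epsilon>\<^sup>2 / 2 * g (\<epsilon> powr \<kappa>) * (deriv U (\<epsilon> powr \<kappa>))\<^sup>2
    + \<epsilon>\<^sup>2 / 2 * integral {\<epsilon> powr \<kappa>..R} (\<lambda>s. (2 * (real N - 1) * g s + s * deriv g s) / s * (deriv U s)\<^sup>2)\<bar>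
    \<le> C3 / \<epsilon>"
proof -
  note e = small_eps[OF eps]
  have "integral {\<epsilon> powr \<kappa>..R} (\<lambda>s. (2 * (real N - 1) * g s + s * deriv g s) / s * (deriv U s)\<^sup>2)
      = integral {\<epsilon> powr \<kappa>..R} (\<lambda>s. weight2 s / s * (U' s)\<^sup>2)"
    using powr_kappa_pos e(3)
    by (intro integral_cong_interior, subst deriv_U) (auto simp: weight2_def simp del: powr_gt_zero)
  moreover have "deriv U (\<epsilon> powr \<kappa>) = U' (\<epsilon> powr \<kappa>)" using powr_kappa_pos e(3) Rpos by (intro deriv_U) auto
  ultimately have "\<bar>- \<epsilon>\<^sup>2 / 2 * g (\<epsilon> powr \<kappa>) * (deriv U (\<epsilon> powr \<kappa>))\<^sup>2
      + \<epsilon>\<^sup>2 / 2 * integral {\<epsilon> powr \<kappa>..R} (\<lambda>s. (2 * (real N - 1) * g s + s * deriv g s) / s * (deriv U s)\<^sup>2)\<bar>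
      = \<bar>- \<epsilon>\<^sup>2 / 2 * g (\<epsilon> powr \<kappa>) * (U' (\<epsilon> powr \<kappa>))\<^sup>2
      + \<epsilon>\<^sup>2 / 2 * integral {\<epsilon> powr \<kappa>..R} (\<lambda>s. weight2 s / s * (U' s)\<^sup>2)\<bar>" by (simp only:)
  also have "\<dots> \<le> K2 / \<epsilon>"
    using S.abs_boundary_energy_le[OF continuous_on_weight2 abs_weight2_le e(2)] e(3) Rpos
    unfolding scaled_Z K2_def by simp
  also have "\<dots> \<le> C3 / \<epsilon>" unfolding C3_def using eps K1_nonneg by (intro divide_right_mono) auto
  finally show ?thesis .
qed

end


lemma estimates:
  assumes sol: "\<And>\<epsilon>. \<epsilon> > 0 \<Longrightarrow> solves_Nstar N R g A B p q \<epsilon> (U \<epsilon>)" and eps: "0 < \<epsilon> \<and> \<epsilon> < eps0"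
  shows "integral {\<epsilon> powr \<kappa>..R - \<epsilon> powr \<kappa>} (\<lambda>s. 1 / s * (deriv (U \<epsilon>) s)\<^sup>2)
         \<le> C1 * exp (- M / (2 * \<epsilon> powr (1 - \<kappa>)))
     \<and> integral {R - \<epsilon> powr \<kappa>..R} (\<lambda>s. (deriv (U \<epsilon>) s)\<^sup>2) \<le> C2 / (M * \<epsilon> ^ 3)
     \<and> \<bar>\<epsilon>\<^sup>2 / 2 * integral {0..R}
          (\<lambda>s. ((real N - 2) * g s + s * deriv g s) / R ^ N * s ^ (N - 1) * (deriv (U \<epsilon>) s)\<^sup>2)\<bar>
         \<le> C3 / \<epsilon>
     \<and> \<bar>- \<epsilon>\<^sup>2 / 2 * g (\<epsilon> powr \<kappa>) * (deriv (U \<epsilon>) (\<epsilon> powr \<kappa>))\<^sup>2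
        + \<epsilon>\<^sup>2 / 2 * integral {\<epsilon> powr \<kappa>..R}
          (\<lambda>s. (2 * (real N - 1) * g s + s * deriv g s) / s * (deriv (U \<epsilon>) s)\<^sup>2)\<bar>
         \<le> C3 / \<epsilon>"
proof -
  obtain U' where "nstar_scaled N R A B p q \<epsilon> g (deriv g) (U \<epsilon>) U' (deriv (deriv (U \<epsilon>))) gmax gmin L"
    and "\<And>r. r \<in> {0<..<R} \<Longrightarrow> deriv (U \<epsilon>) r = U' r"
    using solves_Nstar_imp_nstar_scaled[OF sol] eps small_eps(1) by blast
  then show ?thesis
    using middle_estimate right_estimate weighted_estimate boundary_estimate eps by blast
qed

end

theorem lemma3p8:
  fixes N :: nat and R A B p q \<kappa> :: real and g :: "real \<Rightarrow> real"
    and U :: "real \<Rightarrow> real \<Rightarrow> real"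
  assumes "N \<ge> 2" and "R > 0"
    and "smooth_on_closed R g" and "\<forall>r\<in>{0..R}. g r > 0"
    and "0 < A" and "A < B" and "p > 0" and "q > 0"
    and "0 < \<kappa>" and "\<kappa> < 1"
    and sol: "\<And>\<epsilon>. \<epsilon> > 0 \<Longrightarrow> solves_Nstar N R g A B p q \<epsilon> (U \<epsilon>)"
  defines "Mt \<equiv> sqrt (A * (p + q) / Sup (g ` {0..R}) * (q / p) powr ((p - q) / (p + q)))"
  shows "\<exists>C1 C2 C3. C1 > 0 \<and> C2 > 0 \<and> C3 > 0 \<and>
    (\<forall>\<^sub>F \<epsilon> in at_right 0.
       integral {\<epsilon> powr \<kappa>..R - \<epsilon> powr \<kappa>} (\<lambda>s. 1 / s * (deriv (U \<epsilon>) s)\<^sup>2)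
         \<le> C1 * exp (- Mt / (2 * \<epsilon> powr (1 - \<kappa>)))
     \<and> integral {R - \<epsilon> powr \<kappa>..R} (\<lambda>s. (deriv (U \<epsilon>) s)\<^sup>2) \<le> C2 / (Mt * \<epsilon> ^ 3)
     \<and> \<bar>\<epsilon>\<^sup>2 / 2 * integral {0..R}
          (\<lambda>s. ((real N - 2) * g s + s * deriv g s) / R ^ N * s ^ (N - 1) * (deriv (U \<epsilon>) s)\<^sup>2)\<bar>
         \<le> C3 / \<epsilon>
     \<and> \<bar>- \<epsilon>\<^sup>2 / 2 * g (\<epsilon> powr \<kappa>) * (deriv (U \<epsilon>) (\<epsilon> powr \<kappa>))\<^sup>2
        + \<epsilon>\<^sup>2 / 2 * integral {\<epsilon> powr \<kappa>..R}
          (\<lambda>s. (2 * (real N - 1) * g s + s * deriv g s) / s * (deriv (U \<epsilon>) s)\<^sup>2)\<bar>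
         \<le> C3 / \<epsilon>)"
proof -
  interpret nstar_problem N R A B p q \<kappa> g
    using assms by unfold_locales auto
  have "Mt = M" unfolding Mt_def M_def gmax_def ..
  have "\<forall>\<^sub>F \<epsilon> in at_right 0. 0 < \<epsilon> \<and> \<epsilon> < eps0"
    unfolding eventually_at_right_field using eps0_pos by blast
  from eventually_mono[OF this estimates[OF sol]] show ?thesis
    unfolding \<open>Mt = M\<close> by (intro exI[of _ C1] exI[of _ C2] exI[of _ C3] conjI constants_pos)
qed

end
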